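(* Let $\mathcal{A}=(\mathcal{E},\{M_i\}_{i\in\mathcal{O}})$ be a quantum decision model with Kraus form $\mathcal{E}(\rho)=\sum_jE_j\rho E_j^\dagger$. (1) The Lipschitz constant of $\mathcal{A}$ is \[K^*=\max_{A\subseteq\mathcal{O}}\big[\lambda_{\max}(M_A)-\lambda_{\min}(M_A)\big],\qquad M_A=\sum_{i\in A}\mathcal{E}^\dagger(M_i^\dagger M_i),\] where $\mathcal{E}^\dagger(X)=\sum_jE_j^\dagger XE_j$ and $\lambda_{\max},\lambda_{\min}$ denote the largest and smallest eigenvalues of the positive semidefinite matrix $M_A$ (with $M_\emptyset=0$). (2) Let $A^*\subseteq\mathcal{O}$ attain this maximum, and let $|\psi\rangle,|\phi\rangle$ be normalized eigenvectors of $M_{A^*}$ for its largest and smallest eigenvalues respectively (chosen mutually orthogonal). Then, with $\psi=|\psi\rangle\langle\psi|$ and $\phi=|\phi\rangle\langle\phi|$, \[ d(\mathcal{A}(\psi),\mathcal{A}(\phi))=K^*D(\psi,\phi)=K^*. \]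
   Context: $\mathcal{H}$ is a Hilbert space of finite dimension $N$, $\mathcal{D}(\mathcal{H})$ its density matrices. A quantum decision model $\mathcal{A}=(\mathcal{E},\{M_i\}_{i\in\mathcal{O}})$ consists of a completely positive trace-preserving map $\mathcal{E}$ and a measurement $\{M_i\}_{i\in\mathcal{O}}$ ($\mathcal{O}$ finite, $\sum_iM_i^\dagger M_i=I$) and maps $\rho$ to $\mathcal{A}(\rho)=\{\mathrm{tr}(M_i\mathcal{E}(\rho)M_i^\dagger)\}_{i\in\mathcal{O}}$. $D(\rho,\sigma)=\frac12\mathrm{tr}|\rho-\sigma|$; $d(p,q)=\frac12\sum_i|p_i-q_i|$. The Lipschitz constant $K^*$ of $\mathcal{A}$ is the smallest $K\ge0$ with $d(\mathcal{A}(\rho),\mathcal{A}(\sigma))\le KD(\rho,\sigma)$ for all $\rho,\sigma\in\mathcal{D}(\mathcal{H})$. *)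

theory Defs
  imports "Jordan_Normal_Form.Matrix" "Jordan_Normal_Form.Char_Poly"
begin

definition dag :: "complex mat \<Rightarrow> complex mat" where
  "dag A = mat (dim_col A) (dim_row A) (\<lambda>(i,j). cnj (A $$ (j,i)))"

definition mtrace :: "complex mat \<Rightarrow> complex" where
  "mtrace A = (\<Sum>i<dim_row A. A $$ (i,i))"

definition msum :: "nat \<Rightarrow> complex mat list \<Rightarrow> complex mat" where
  "msum n xs = foldr (+) xs (0\<^sub>m n n)"

definition psd :: "nat \<Rightarrow> complex mat \<Rightarrow> bool" where
  "psd n A \<longleftrightarrow> A \<in> carrier_mat n n \<and> dag A = A \<and>
     (\<forall>v \<in> carrier_vec n. Im ((A *\<^sub>v v) \<bullet>c v) = 0 \<and> 0 \<le> Re ((A *\<^sub>v v) \<bullet>c v))"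

definition density :: "nat \<Rightarrow> complex mat \<Rightarrow> bool" where
  "density n \<rho> \<longleftrightarrow> psd n \<rho> \<and> mtrace \<rho> = 1"

definition mabs :: "complex mat \<Rightarrow> complex mat" where
  "mabs X = (THE S. psd (dim_col X) S \<and> S * S = dag X * X)"

definition trace_norm :: "complex mat \<Rightarrow> real" where
  "trace_norm X = Re (mtrace (mabs X))"

definition trace_dist :: "complex mat \<Rightarrow> complex mat \<Rightarrow> real" where
  "trace_dist \<rho> \<sigma> = trace_norm (\<rho> - \<sigma>) / 2"

(* Quantum decision model: CPTP map in Kraus form with Kraus operators Es,
   measurement operators Ms (outcome set O = {0..<length Ms}) *)
definition decision_model :: "nat \<Rightarrow> complex mat list \<Rightarrow> complex mat list \<Rightarrow> bool" where
  "decision_model n Es Ms \<longleftrightarrow>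
     (\<forall>E \<in> set Es. E \<in> carrier_mat n n) \<and>
     msum n (map (\<lambda>E. dag E * E) Es) = 1\<^sub>m n \<and>
     (\<forall>M \<in> set Ms. M \<in> carrier_mat n n) \<and>
     msum n (map (\<lambda>M. dag M * M) Ms) = 1\<^sub>m n"

definition channel :: "nat \<Rightarrow> complex mat list \<Rightarrow> complex mat \<Rightarrow> complex mat" where
  "channel n Es \<rho> = msum n (map (\<lambda>E. E * \<rho> * dag E) Es)"

definition adj_channel :: "nat \<Rightarrow> complex mat list \<Rightarrow> complex mat \<Rightarrow> complex mat" where
  "adj_channel n Es X = msum n (map (\<lambda>E. dag E * X * E) Es)"

definition model_out :: "nat \<Rightarrow> complex mat list \<Rightarrow> complex mat list \<Rightarrow> complex mat \<Rightarrow> nat \<Rightarrow> real" where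
  "model_out n Es Ms \<rho> i = Re (mtrace (Ms ! i * channel n Es \<rho> * dag (Ms ! i)))"

definition tv_dist :: "nat \<Rightarrow> (nat \<Rightarrow> real) \<Rightarrow> (nat \<Rightarrow> real) \<Rightarrow> real" where
  "tv_dist m p q = (\<Sum>i<m. \<bar>p i - q i\<bar>) / 2"

definition lipschitz_bounds :: "nat \<Rightarrow> complex mat list \<Rightarrow> complex mat list \<Rightarrow> real set" where
  "lipschitz_bounds n Es Ms = {K. 0 \<le> K \<and> (\<forall>\<rho> \<sigma>. density n \<rho> \<longrightarrow> density n \<sigma> \<longrightarrow>
      tv_dist (length Ms) (model_out n Es Ms \<rho>) (model_out n Es Ms \<sigma>) \<le> K * trace_dist \<rho> \<sigma>)}"

definition M_set :: "nat \<Rightarrow> complex mat list \<Rightarrow> complex mat list \<Rightarrow> nat set \<Rightarrow> complex mat" where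
  "M_set n Es Ms A = msum n (map (\<lambda>i. adj_channel n Es (dag (Ms ! i) * Ms ! i)) (sorted_list_of_set A))"

(* largest / smallest eigenvalue (of a Hermitian matrix; eigenvalues are real) *)
definition lambda_max :: "complex mat \<Rightarrow> real" where
  "lambda_max M = Max (Re ` {k. eigenvalue M k})"

definition lambda_min :: "complex mat \<Rightarrow> real" where
  "lambda_min M = Min (Re ` {k. eigenvalue M k})"

definition proj :: "complex vec \<Rightarrow> complex mat" where
  "proj v = mat (dim_vec v) (dim_vec v) (\<lambda>(i,j). v $ i * cnj (v $ j))"

end

theory Submission
  imports Defs
begin

text \<open>
  With the effects \<open>F_i = \<E>\<^sup>\<dagger>(M_i\<^sup>\<dagger> M_i)\<close> the outcome probabilities are \<open>\<A>(\<rho>)_i = tr (F_i \<rho>)\<close>,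
  and \<open>M_A\<close> is the sum of the \<open>F_i\<close> over \<open>i \<in> A\<close>. The total variation distance
  \<open>d(\<A>(\<rho>), \<A>(\<sigma>))\<close> equals \<open>tr (M_A (\<rho> - \<sigma>))\<close> for the set \<open>A\<close> of outcomes whose probability
  increases. Writing the traceless Hermitian matrix \<open>\<rho> - \<sigma>\<close> as \<open>\<Sum>_l d_l |u_l\<rangle>\<langle>u_l|\<close>, this is
  \<open>\<Sum>_l d_l \<langle>u_l|M_A|u_l\<rangle>\<close>; since \<open>\<Sum>_l d_l = 0\<close>, every Rayleigh quotient may be measured from
  the midpoint of \<open>[\<lambda>_min, \<lambda>_max]\<close>, which bounds the sum by
  \<open>(\<lambda>_max - \<lambda>_min) \<Sum>_l |d_l| / 2 = (\<lambda>_max - \<lambda>_min) D(\<rho>, \<sigma>)\<close>. Conversely, for orthonormal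
  eigenvectors \<open>\<psi>, \<phi>\<close> of \<open>M_A\<close> with eigenvalues \<open>\<lambda>_max, \<lambda>_min\<close> the pure states have trace
  distance \<open>1\<close>, while the probabilities of the outcomes in \<open>A\<close> differ by exactly \<open>\<lambda>_max - \<lambda>_min\<close>.
\<close>

section \<open>Conjugate transpose, trace and sums of matrices\<close>

lemma dag_dim [simp]: "dim_row (dag A) = dim_col A" "dim_col (dag A) = dim_row A"
  by (simp_all add: dag_def)

lemma dag_carrier [simp]: "A \<in> carrier_mat nr nc \<Longrightarrow> dag A \<in> carrier_mat nc nr"
  by (metis carrier_matD carrier_matI dag_dim)

lemma index_dag [simp]: "i < dim_col A \<Longrightarrow> j < dim_row A \<Longrightarrow> dag A $$ (i,j) = cnj (A $$ (j,i))"
  by (simp add: dag_def)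

lemma dag_dag [simp]: "dag (dag A) = A"
  by (rule eq_matI) simp_all

lemma dag_zero [simp]: "dag (0\<^sub>m nr nc) = 0\<^sub>m nc nr"
  by (rule eq_matI) auto

lemma mult_carrier_mat_square [simp]:
  "A \<in> carrier_mat n n \<Longrightarrow> B \<in> carrier_mat n n \<Longrightarrow> A * B \<in> carrier_mat n n"
  by (rule mult_carrier_mat)

lemma mult_inverse_cancel_left:
  fixes A B X :: "'a::semiring_1 mat"
  assumes "A \<in> carrier_mat n n" "B \<in> carrier_mat n n" "A * B = 1\<^sub>m n" "X \<in> carrier_mat n n"
  shows "A * (B * X) = X"
  using assms assoc_mult_mat[of A n n B n X n] left_mult_one_mat[of X n n] by simp

lemma index_mult_mat_sum:
  "i < dim_row A \<Longrightarrow> j < dim_col B \<Longrightarrow> dim_col A = dim_row B \<Longrightarrow>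
   (A * B) $$ (i,j) = (\<Sum>l<dim_row B. A $$ (i,l) * B $$ (l,j))"
  by (simp add: scalar_prod_def atLeast0LessThan)

lemma index_mult_mat_vec_sum:
  "i < dim_row A \<Longrightarrow> dim_col A = dim_vec v \<Longrightarrow> (A *\<^sub>v v) $ i = (\<Sum>l<dim_vec v. A $$ (i,l) * v $ l)"
  by (simp add: scalar_prod_def mult_mat_vec_def atLeast0LessThan)

lemma cscalar_prod_sum: "v \<bullet>c w = (\<Sum>i<dim_vec w. v $ i * cnj (w $ i))"
  by (simp add: scalar_prod_def atLeast0LessThan)

lemma dag_mult:
  assumes "A \<in> carrier_mat nr k" "B \<in> carrier_mat k nc"
  shows "dag (A * B) = dag B * dag A"
  using assms
  by (intro eq_matI) (auto simp: index_mult_mat_sum cnj_sum mult.commute simp del: index_mult_mat(1))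

lemma dag_add:
  "A \<in> carrier_mat nr nc \<Longrightarrow> B \<in> carrier_mat nr nc \<Longrightarrow> dag (A + B) = dag A + dag B"
  by (intro eq_matI) auto

lemma dag_minus:
  "A \<in> carrier_mat nr nc \<Longrightarrow> B \<in> carrier_mat nr nc \<Longrightarrow> dag (A - B) = dag A - dag B"
  by (intro eq_matI) auto

lemma dag_mult_dag:
  assumes "A \<in> carrier_mat n n" "B \<in> carrier_mat n n"
  shows "dag (dag A * B * A) = dag A * dag B * A"
proof -
  have "dag (dag A * B * A) = dag A * dag (dag A * B)"
    using assms by (intro dag_mult[of _ n n]) auto
  also have "dag (dag A * B) = dag B * A"
    using assms dag_mult[of "dag A" n n B n] by simp
  finally show ?thesis
    using assms by (simp add: assoc_mult_mat[of _ n n _ n _ n])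
qed

lemma cscalar_prod_mult_dag:
  assumes A: "A \<in> carrier_mat nr nc" and v: "v \<in> carrier_vec nc" and w: "w \<in> carrier_vec nr"
  shows "(A *\<^sub>v v) \<bullet>c w = v \<bullet>c (dag A *\<^sub>v w)"
proof -
  have "(A *\<^sub>v v) \<bullet>c w = (\<Sum>i<nr. (\<Sum>l<nc. A $$ (i,l) * v $ l) * cnj (w $ i))"
    using A v w by (simp add: cscalar_prod_sum index_mult_mat_vec_sum del: index_mult_mat_vec)
  also have "\<dots> = (\<Sum>l<nc. v $ l * (\<Sum>i<nr. A $$ (i,l) * cnj (w $ i)))"
    by (simp add: sum_distrib_left sum_distrib_right ac_simps, rule sum.swap)
  also have "\<dots> = v \<bullet>c (dag A *\<^sub>v w)"
    using A v w by (simp add: cscalar_prod_sum index_mult_mat_vec_sum cnj_sum del: index_mult_mat_vec)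
  finally show ?thesis .
qed

lemma cscalar_prod_swap: "dim_vec v = dim_vec w \<Longrightarrow> v \<bullet>c w = cnj (w \<bullet>c v)"
  by (simp add: cscalar_prod_sum cnj_sum mult.commute)

lemma cscalar_prod_smult_left: "dim_vec (v :: complex vec) = dim_vec w \<Longrightarrow> (a \<cdot>\<^sub>v v) \<bullet>c w = a * (v \<bullet>c w)"
  by (simp add: cscalar_prod_sum sum_distrib_left ac_simps)

lemma cscalar_prod_smult_right: "dim_vec (v :: complex vec) = dim_vec w \<Longrightarrow> v \<bullet>c (a \<cdot>\<^sub>v w) = cnj a * (v \<bullet>c w)"
  by (simp add: cscalar_prod_sum sum_distrib_left ac_simps)

lemma cscalar_prod_unit_vec:
  fixes v :: "complex vec"
  assumes "v \<in> carrier_vec n" "l < n"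
  shows "v \<bullet>c unit_vec n l = v $ l"
proof -
  have "conjugate (unit_vec n l :: complex vec) = unit_vec n l"
    by (intro eq_vecI) (auto simp: unit_vec_def)
  then show ?thesis
    using assms by simp
qed

lemma cscalar_prod_self_pos:
  "v \<in> carrier_vec n \<Longrightarrow> v \<noteq> 0\<^sub>v n \<Longrightarrow> 0 < Re (v \<bullet>c v) \<and> Im (v \<bullet>c v) = 0"
  using conjugate_square_greater_0_vec[of v n] by (simp add: less_complex_def)

lemma msum_Nil [simp]: "msum n [] = 0\<^sub>m n n"
  by (simp add: msum_def)

lemma msum_Cons [simp]: "msum n (x # xs) = x + msum n xs"
  by (simp add: msum_def)

lemma msum_carrier [simp]:
  "(\<And>x. x \<in> set xs \<Longrightarrow> x \<in> carrier_mat n n) \<Longrightarrow> msum n xs \<in> carrier_mat n n"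
  by (induct xs) auto

lemma dag_msum:
  "(\<And>x. x \<in> set xs \<Longrightarrow> x \<in> carrier_mat n n) \<Longrightarrow> dag (msum n xs) = msum n (map dag xs)"
  by (induct xs) (simp_all add: dag_add[of _ n n])

lemma mtrace_add: "A \<in> carrier_mat n n \<Longrightarrow> B \<in> carrier_mat n n \<Longrightarrow> mtrace (A + B) = mtrace A + mtrace B"
  by (simp add: mtrace_def sum.distrib)

lemma mtrace_minus: "A \<in> carrier_mat n n \<Longrightarrow> B \<in> carrier_mat n n \<Longrightarrow> mtrace (A - B) = mtrace A - mtrace B"
  by (simp add: mtrace_def sum_subtractf)

lemma mtrace_one [simp]: "mtrace (1\<^sub>m n) = of_nat n"
  by (simp add: mtrace_def)

lemma mtrace_zero [simp]: "mtrace (0\<^sub>m n n) = 0"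
  by (simp add: mtrace_def)

lemma mtrace_msum:
  "(\<And>x. x \<in> set xs \<Longrightarrow> x \<in> carrier_mat n n) \<Longrightarrow> mtrace (msum n xs) = (\<Sum>x\<leftarrow>xs. mtrace x)"
proof (induct xs)
  case (Cons x xs)
  then show ?case
    by (simp add: mtrace_add[of _ n])
qed simp

lemma mtrace_mult_msum_left:
  assumes "Q \<in> carrier_mat n n" "\<And>x. x \<in> set xs \<Longrightarrow> f x \<in> carrier_mat n n"
  shows "mtrace (Q * msum n (map f xs)) = (\<Sum>x\<leftarrow>xs. mtrace (Q * f x))"
  using assms(2)
proof (induct xs)
  case (Cons x xs)
  have fx: "f x \<in> carrier_mat n n" and fs: "msum n (map f xs) \<in> carrier_mat n n"
    using Cons.prems by (auto intro!: msum_carrier)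
  show ?case
    using Cons mult_add_distrib_mat[OF assms(1) fx fs]
      mtrace_add[OF mult_carrier_mat[OF assms(1) fx] mult_carrier_mat[OF assms(1) fs]] by simp
qed (use assms(1) in simp)

lemma mtrace_mult_msum_right:
  assumes "Q \<in> carrier_mat n n" "\<And>x. x \<in> set xs \<Longrightarrow> f x \<in> carrier_mat n n"
  shows "mtrace (msum n (map f xs) * Q) = (\<Sum>x\<leftarrow>xs. mtrace (f x * Q))"
  using assms(2)
proof (induct xs)
  case (Cons x xs)
  have fx: "f x \<in> carrier_mat n n" and fs: "msum n (map f xs) \<in> carrier_mat n n"
    using Cons.prems by (auto intro!: msum_carrier)
  show ?case
    using Cons add_mult_distrib_mat[OF fx fs assms(1)]
      mtrace_add[OF mult_carrier_mat[OF fx assms(1)] mult_carrier_mat[OF fs assms(1)]] by simp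
qed (use assms(1) in simp)

lemma mtrace_mult_comm:
  assumes "A \<in> carrier_mat n m" "B \<in> carrier_mat m n"
  shows "mtrace (A * B) = mtrace (B * A)"
proof -
  have "mtrace (A * B) = (\<Sum>i<n. \<Sum>l<m. A $$ (i,l) * B $$ (l,i))"
    using assms by (simp add: mtrace_def index_mult_mat_sum del: index_mult_mat(1))
  also have "\<dots> = (\<Sum>l<m. \<Sum>i<n. B $$ (l,i) * A $$ (i,l))"
    by (subst sum.swap) (simp add: mult.commute)
  also have "\<dots> = mtrace (B * A)"
    using assms by (simp add: mtrace_def index_mult_mat_sum del: index_mult_mat(1))
  finally show ?thesis .
qed

lemma mtrace_mult_sandwich:
  assumes "A \<in> carrier_mat n n" "B \<in> carrier_mat n n" "C \<in> carrier_mat n n"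
  shows "mtrace (A * (B * C * dag B)) = mtrace (dag B * A * B * C)"
proof -
  have "mtrace (A * (B * C * dag B)) = mtrace ((A * B * C) * dag B)"
    using assms by (simp add: assoc_mult_mat[of _ n n _ n _ n])
  also have "\<dots> = mtrace (dag B * (A * B * C))"
    using assms by (intro mtrace_mult_comm[of _ n n]) auto
  also have "\<dots> = mtrace (dag B * A * B * C)"
    using assms by (simp add: assoc_mult_mat[of _ n n _ n _ n])
  finally show ?thesis .
qed

section \<open>Unitary matrices and the spectral theorem\<close>

definition hermitian :: "nat \<Rightarrow> complex mat \<Rightarrow> bool" where
  "hermitian n A \<longleftrightarrow> A \<in> carrier_mat n n \<and> dag A = A"

definition unitary :: "nat \<Rightarrow> complex mat \<Rightarrow> bool" where
  "unitary n U \<longleftrightarrow> U \<in> carrier_mat n n \<and> dag U * U = 1\<^sub>m n \<and> U * dag U = 1\<^sub>m n"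

definition orthonormal :: "complex vec list \<Rightarrow> bool" where
  "orthonormal us \<longleftrightarrow> (\<forall>i<length us. \<forall>j<length us. us!i \<bullet>c us!j = (if i = j then 1 else 0))"

lemma hermitian_msum:
  assumes "\<And>x. x \<in> set xs \<Longrightarrow> hermitian n x"
  shows "hermitian n (msum n xs)"
proof -
  have "dag (msum n xs) = msum n (map dag xs)"
    using assms by (intro dag_msum) (simp add: hermitian_def)
  also have "map dag xs = xs"
    using assms by (intro map_idI) (simp add: hermitian_def)
  finally show ?thesis
    using assms by (auto simp: hermitian_def)
qed

lemma exists_unit_multiple:
  fixes v :: "complex vec"
  assumes "v \<in> carrier_vec n" "v \<noteq> 0\<^sub>v n"
  shows "\<exists>a. a \<noteq> 0 \<and> (a \<cdot>\<^sub>v v) \<bullet>c (a \<cdot>\<^sub>v v) = 1"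
proof -
  define r where "r = Re (v \<bullet>c v)"
  have r: "0 < r" "v \<bullet>c v = complex_of_real r"
    using cscalar_prod_self_pos[OF assms] by (auto simp: r_def complex_eq_iff)
  define a where "a = complex_of_real (1 / sqrt r)"
  have "(a \<cdot>\<^sub>v v) \<bullet>c (a \<cdot>\<^sub>v v) = a * cnj a * complex_of_real r"
    by (simp add: cscalar_prod_smult_left cscalar_prod_smult_right r(2))
  also have "\<dots> = 1"
    using r(1) by (simp add: a_def field_simps flip: of_real_mult)
  finally show ?thesis
    using r(1) by (intro exI[of _ a]) (simp add: a_def)
qed

lemma orthonormal_snoc:
  assumes us: "set us \<subseteq> carrier_vec n" and w: "w \<in> carrier_vec n" and on: "orthonormal us"
    and ww: "w \<bullet>c w = 1" and wu: "\<forall>u\<in>set us. w \<bullet>c u = 0"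
  shows "orthonormal (us @ [w])"
  unfolding orthonormal_def
proof (intro allI impI)
  fix i j assume "i < length (us @ [w])" "j < length (us @ [w])"
  moreover have "\<forall>u\<in>set us. u \<bullet>c w = 0"
    using wu us w cscalar_prod_swap[of _ w] by auto
  ultimately show "(us @ [w]) ! i \<bullet>c (us @ [w]) ! j = (if i = j then 1 else 0)"
    using on ww wu unfolding orthonormal_def
    by (cases "i < length us"; cases "j < length us"; auto simp: nth_append)
qed

lemma dag_mult_mat_of_cols:
  assumes "set us \<subseteq> carrier_vec n"
  shows "dag (mat_of_cols n us) * mat_of_cols n us = mat (length us) (length us) (\<lambda>(i,j). us!j \<bullet>c us!i)"
proof (rule eq_matI)
  fix i j assume "i < dim_row (mat (length us) (length us) (\<lambda>(i,j). us!j \<bullet>c us!i))"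
    "j < dim_col (mat (length us) (length us) (\<lambda>(i,j). us!j \<bullet>c us!i))"
  moreover from this have "dim_vec (us!i) = n" "dim_vec (us!j) = n"
    using assms by (auto dest!: nth_mem)
  ultimately show "(dag (mat_of_cols n us) * mat_of_cols n us) $$ (i, j) =
      mat (length us) (length us) (\<lambda>(i,j). us!j \<bullet>c us!i) $$ (i, j)"
    by (simp add: index_mult_mat_sum cscalar_prod_sum mat_of_cols_def mult.commute
        del: index_mult_mat(1))
qed auto

lemma orthonormal_isometry:
  "set us \<subseteq> carrier_vec n \<Longrightarrow> orthonormal us \<Longrightarrow>
   dag (mat_of_cols n us) * mat_of_cols n us = 1\<^sub>m (length us)"
  unfolding dag_mult_mat_of_cols orthonormal_def by (intro eq_matI) auto

lemma unitary_mat_of_cols: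
  assumes "set us \<subseteq> carrier_vec n" "orthonormal us" "length us = n"
  shows "unitary n (mat_of_cols n us)"
proof -
  let ?U = "mat_of_cols n us"
  have U: "?U \<in> carrier_mat n n" and UU: "dag ?U * ?U = 1\<^sub>m n"
    using assms orthonormal_isometry[of us n] by auto
  then show ?thesis
    unfolding unitary_def using mat_mult_left_right_inverse[OF dag_carrier[OF U] U UU] by blast
qed

lemma unitaryD:
  assumes "unitary n U"
  shows "U \<in> carrier_mat n n" "dag U \<in> carrier_mat n n" "dag U * U = 1\<^sub>m n" "U * dag U = 1\<^sub>m n"
  using assms by (auto simp: unitary_def)

lemma unitary_cancel:
  assumes "unitary n U" "X \<in> carrier_mat n n"
  shows "dag U * (U * X) = X" "U * (dag U * X) = X"
  using unitaryD[OF assms(1)] assms(2)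
  by (simp_all add: mult_inverse_cancel_left[of "dag U" n U] mult_inverse_cancel_left[of U n "dag U"])

lemma index_dag_mult:
  assumes "U \<in> carrier_mat n m" "M \<in> carrier_mat n m'" "j < m" "l < m'"
  shows "(dag U * M) $$ (j,l) = col M l \<bullet>c col U j"
  using assms by (simp add: index_mult_mat_sum cscalar_prod_sum mult.commute del: index_mult_mat(1))

lemma index_dag_mult_mult:
  assumes U: "U \<in> carrier_mat n m" and A: "A \<in> carrier_mat n n" and "j < m" "l < m"
  shows "(dag U * A * U) $$ (j,l) = (A *\<^sub>v col U l) \<bullet>c col U j"
proof -
  have "dag U * A * U = dag U * (A * U)"
    using U A by (simp add: assoc_mult_mat[of _ m n _ n _ m])
  also have "\<dots> $$ (j,l) = col (A * U) l \<bullet>c col U j"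
    using index_dag_mult[OF U mult_carrier_mat[OF A U]] assms by blast
  also have "col (A * U) l = A *\<^sub>v col U l"
    using col_mult2[OF A U] assms by blast
  finally show ?thesis .
qed

lemma unitary_cols_orthonormal:
  assumes "unitary n U" "i < n" "j < n"
  shows "col U j \<bullet>c col U i = (if i = j then 1 else 0)"
  using index_dag_mult[of U n n U n i j] unitaryD[OF assms(1)] assms(2,3) by auto

text \<open>With \<open>U\<close> the matrix whose columns are \<open>us\<close>, the projection \<open>1 - U U\<^sup>\<dagger>\<close> onto their
  orthogonal complement has trace \<open>n - k > 0\<close>, so one of its columns is a nonzero vector orthogonal
  to \<open>us\<close>.\<close>

lemma exists_unit_orthogonal:
  assumes us: "set us \<subseteq> carrier_vec n" and on: "orthonormal us" and kn: "length us < n"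
  shows "\<exists>w \<in> carrier_vec n. w \<bullet>c w = 1 \<and> (\<forall>u\<in>set us. w \<bullet>c u = 0)"
proof -
  define k where "k = length us"
  define U where "U = mat_of_cols n us"
  define P where "P = 1\<^sub>m n - U * dag U"
  have U: "U \<in> carrier_mat n k" and dU: "dag U \<in> carrier_mat k n"
    by (simp_all add: U_def k_def)
  have UU: "dag U * U = 1\<^sub>m k"
    using orthonormal_isometry[OF us on] by (simp add: U_def k_def)
  have P: "P \<in> carrier_mat n n"
    using mult_carrier_mat[OF U dU] by (simp add: P_def minus_carrier_mat)
  have UP: "dag U * P = 0\<^sub>m k n"
  proof -
    have "dag U * P = dag U * 1\<^sub>m n - dag U * (U * dag U)"
      using U unfolding P_def by (subst mult_minus_distrib_mat[of _ k n]) auto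
    also have "dag U * (U * dag U) = (dag U * U) * dag U"
      using assoc_mult_mat[OF dU U dU] by simp
    finally show ?thesis
      using UU left_mult_one_mat[OF dU] right_mult_one_mat[OF dU] minus_r_inv_mat[OF dU] by simp
  qed
  have "mtrace P = of_nat n - mtrace (dag U * U)"
    using U mtrace_mult_comm[OF U dU] by (simp add: P_def mtrace_minus[of _ n])
  then have "mtrace P \<noteq> 0"
    using UU kn by (simp add: k_def)
  then obtain j where j: "j < n" "P $$ (j,j) \<noteq> 0"
    using P unfolding mtrace_def by (auto elim: sum.not_neutral_contains_not_neutral)
  define v where "v = col P j"
  have "v $ j \<noteq> 0"
    using P j by (simp add: v_def)
  moreover have "v \<in> carrier_vec n"
    using P by (simp add: v_def carrier_vecI)
  ultimately have v: "v \<in> carrier_vec n" "v \<noteq> 0\<^sub>v n"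
    using j by auto
  have orth: "v \<bullet>c u = 0" if u: "u \<in> set us" for u
  proof -
    obtain l where "l < k" "u = us ! l"
      using u by (auto simp: in_set_conv_nth k_def)
    moreover from this have "us ! l \<in> carrier_vec n"
      using us by (auto simp: k_def)
    ultimately have l: "l < k" "u = col U l"
      by (simp_all add: U_def k_def)
    then show ?thesis
      using index_dag_mult[OF U P l(1) j(1)] UP l(1) j(1) by (simp add: v_def)
  qed
  obtain a where a: "(a \<cdot>\<^sub>v v) \<bullet>c (a \<cdot>\<^sub>v v) = 1"
    using exists_unit_multiple[OF v] by blast
  have "(a \<cdot>\<^sub>v v) \<bullet>c u = 0" if "u \<in> set us" for u
    using that orth us v by (auto simp: cscalar_prod_smult_left)
  moreover have "a \<cdot>\<^sub>v v \<in> carrier_vec n"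
    using v by simp
  ultimately show ?thesis
    using a by blast
qed

lemma orthonormal_extend:
  "set us \<subseteq> carrier_vec n \<Longrightarrow> orthonormal us \<Longrightarrow> length us \<le> n \<Longrightarrow>
   \<exists>ws. set ws \<subseteq> carrier_vec n \<and> orthonormal (us @ ws) \<and> length (us @ ws) = n"
proof (induct "n - length us" arbitrary: us)
  case 0
  then show ?case
    by (intro exI[of _ "[]"]) auto
next
  case (Suc d)
  then have "length us < n"
    by arith
  then obtain w where w: "w \<in> carrier_vec n" "w \<bullet>c w = 1" "\<forall>u\<in>set us. w \<bullet>c u = 0"
    using exists_unit_orthogonal[of us n] Suc.prems by blast
  have "\<exists>ws. set ws \<subseteq> carrier_vec n \<and> orthonormal ((us @ [w]) @ ws) \<and> length ((us @ [w]) @ ws) = n"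
    using Suc.hyps(2) Suc.prems w orthonormal_snoc[of us n w] by (intro Suc.hyps(1)) auto
  then obtain ws where "set ws \<subseteq> carrier_vec n" "orthonormal (us @ [w] @ ws)"
    "length (us @ [w] @ ws) = n"
    by auto
  then show ?case
    using w by (intro exI[of _ "w # ws"]) simp
qed

lemma exists_eigenvector:
  fixes C :: "complex mat"
  assumes C: "C \<in> carrier_mat m m" and m: "0 < m"
  shows "\<exists>c \<mu>. c \<in> carrier_vec m \<and> c \<noteq> 0\<^sub>v m \<and> C *\<^sub>v c = \<mu> \<cdot>\<^sub>v c"
proof -
  obtain as where as: "char_poly C = (\<Prod>a\<leftarrow>as. [:- a, 1:])" "length as = m"
    using char_poly_factorized[OF C] by blast
  then obtain a as' where "as = a # as'"
    using m by (cases as) auto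
  then have "eigenvalue C a"
    using as eigenvalue_root_char_poly[OF C] by simp
  then show ?thesis
    using C unfolding eigenvalue_def eigenvector_def by auto
qed

lemma sum_lessThan_drop_prefix:
  fixes f :: "nat \<Rightarrow> 'a::comm_monoid_add"
  assumes "k \<le> n" "\<And>j. j < k \<Longrightarrow> f j = 0"
  shows "(\<Sum>j<n. f j) = (\<Sum>b<n-k. f (k+b))"
proof -
  have "(\<Sum>j<n. f j) = (\<Sum>j\<in>{0..<k}. f j) + (\<Sum>j\<in>{k..<n}. f j)"
    using sum.atLeastLessThan_concat[of 0 k n f] assms(1) by (simp add: atLeast0LessThan)
  also have "(\<Sum>j\<in>{0..<k}. f j) = 0"
    using assms(2) by simp
  also have "(\<Sum>j\<in>{k..<n}. f j) = (\<Sum>b<n-k. f (k+b))"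
    using sum.atLeastLessThan_shift_0[of f k n] by (simp add: comp_def atLeast0LessThan)
  finally show ?thesis
    by simp
qed

text \<open>An eigenvector of the lower right block, padded with zeros, is an eigenvector of the
  whole matrix, since the upper right block vanishes.\<close>

lemma exists_eigenvector_vanishing_prefix:
  fixes B :: "complex mat"
  assumes B: "B \<in> carrier_mat n n" and kn: "k < n"
    and zero: "\<And>i j. i < k \<Longrightarrow> k \<le> j \<Longrightarrow> j < n \<Longrightarrow> B $$ (i,j) = 0"
  shows "\<exists>y \<mu>. y \<in> carrier_vec n \<and> y \<noteq> 0\<^sub>v n \<and> (\<forall>i<k. y $ i = 0) \<and> B *\<^sub>v y = \<mu> \<cdot>\<^sub>v y"
proof -
  define m where "m = n - k"
  have m: "0 < m" "n = k + m"
    using kn by (auto simp: m_def)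
  define C where "C = mat m m (\<lambda>(a,b). B $$ (k+a, k+b))"
  obtain c \<mu> where c: "c \<in> carrier_vec m" "c \<noteq> 0\<^sub>v m" "C *\<^sub>v c = \<mu> \<cdot>\<^sub>v c"
    using exists_eigenvector[of C m] m by (auto simp: C_def)
  define y where "y = vec n (\<lambda>i. if i < k then 0 else c $ (i - k))"
  have By: "B *\<^sub>v y = \<mu> \<cdot>\<^sub>v y"
  proof (rule eq_vecI)
    fix i assume "i < dim_vec (\<mu> \<cdot>\<^sub>v y)"
    then have i: "i < n"
      by (simp add: y_def)
    have "(B *\<^sub>v y) $ i = (\<Sum>j<n. B $$ (i,j) * y $ j)"
      using B i by (simp add: index_mult_mat_vec_sum y_def del: index_mult_mat_vec)
    also have "\<dots> = (\<Sum>b<m. B $$ (i,k+b) * c $ b)"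
      by (subst sum_lessThan_drop_prefix[of k]) (auto simp: y_def m)
    also have "\<dots> = \<mu> * y $ i"
    proof (cases "i < k")
      case True
      then show ?thesis
        using zero i m by (simp add: y_def)
    next
      case False
      then obtain a where a: "i = k + a" "a < m"
        using i m by (metis add_diff_inverse_nat nat_add_left_cancel_less)
      have "(C *\<^sub>v c) $ a = (\<Sum>b<m. B $$ (i,k+b) * c $ b)"
        using c(1) a by (simp add: C_def index_mult_mat_vec_sum del: index_mult_mat_vec)
      then show ?thesis
        using c(1,3) a i by (simp add: y_def)
    qed
    finally show "(B *\<^sub>v y) $ i = (\<mu> \<cdot>\<^sub>v y) $ i"
      using i by (simp add: y_def)
  qed (use B in \<open>simp add: y_def\<close>)
  obtain a where a: "a < m" "c $ a \<noteq> 0"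
    using c(1,2) by (metis carrier_vecD eq_vecI index_zero_vec)
  then have "y $ (k + a) \<noteq> 0"
    using m by (simp add: y_def)
  then have "y \<noteq> 0\<^sub>v n"
    using a m by auto
  then show ?thesis
    using By kn by (intro exI[of _ y] exI[of _ \<mu>]) (simp add: y_def)
qed

lemma hermitian_eigenvector_eigenvalue_real:
  assumes A: "hermitian n A" and v: "v \<in> carrier_vec n" "v \<noteq> 0\<^sub>v n" and Av: "A *\<^sub>v v = \<mu> \<cdot>\<^sub>v v"
  shows "\<mu> = complex_of_real (Re \<mu>)"
proof -
  have "\<mu> * (v \<bullet>c v) = (A *\<^sub>v v) \<bullet>c v"
    using Av v by (simp add: cscalar_prod_smult_left)
  also have "\<dots> = v \<bullet>c (A *\<^sub>v v)"
    using A v cscalar_prod_mult_dag[of A n n v v] by (simp add: hermitian_def)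
  also have "\<dots> = cnj \<mu> * (v \<bullet>c v)"
    using Av v by (simp add: cscalar_prod_smult_right)
  finally have "cnj \<mu> = \<mu>"
    using cscalar_prod_self_pos[OF v] by auto
  then show ?thesis
    by (simp add: complex_eq_iff)
qed

lemma hermitian_eigenvectors_orthogonal:
  assumes M: "hermitian n M" and v: "v \<in> carrier_vec n" and w: "w \<in> carrier_vec n"
    and ev: "M *\<^sub>v v = complex_of_real a \<cdot>\<^sub>v v" and ew: "M *\<^sub>v w = complex_of_real b \<cdot>\<^sub>v w" and "a \<noteq> b"
  shows "v \<bullet>c w = 0"
proof -
  have "complex_of_real a * (v \<bullet>c w) = (M *\<^sub>v v) \<bullet>c w"
    using ev v w by (simp add: cscalar_prod_smult_left)
  also have "\<dots> = v \<bullet>c (M *\<^sub>v w)"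
    using cscalar_prod_mult_dag[of M n n v w] M v w by (simp add: hermitian_def)
  also have "\<dots> = complex_of_real b * (v \<bullet>c w)"
    using ew v w by (simp add: cscalar_prod_smult_right)
  finally show ?thesis
    using \<open>a \<noteq> b\<close> by simp
qed

lemma hermitian_conj_row_eigenvector:
  assumes A: "hermitian n A" and U: "unitary n U" and ij: "i < n" "j < n" "i \<noteq> j"
    and ev: "A *\<^sub>v col U i = c \<cdot>\<^sub>v col U i"
  shows "(dag U * A * U) $$ (i,j) = 0"
proof -
  have Ac: "A \<in> carrier_mat n n" and hA: "dag A = A"
    using A by (auto simp: hermitian_def)
  note Uc = unitaryD(1)[OF U]
  have "(dag U * A * U) $$ (i,j) = col U j \<bullet>c (A *\<^sub>v col U i)"
    using index_dag_mult_mult[OF Uc Ac ij(1,2)] cscalar_prod_mult_dag[OF Ac, of "col U j" "col U i"]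
      Uc hA ij by simp
  also have "\<dots> = cnj c * (col U j \<bullet>c col U i)"
    using Uc ij by (simp add: ev cscalar_prod_smult_right)
  also have "col U j \<bullet>c col U i = 0"
    using unitary_cols_orthonormal[OF U ij(1,2)] ij(3) by simp
  finally show ?thesis
    by simp
qed

lemma unitary_mult_vec_cscalar_col:
  assumes U: "unitary n U" and y: "y \<in> carrier_vec n" and l: "l < n"
  shows "(U *\<^sub>v y) \<bullet>c col U l = y $ l"
proof -
  note Uc = unitaryD(1)[OF U] and dU = unitaryD(2)[OF U]
  have "(U *\<^sub>v y) \<bullet>c col U l = y \<bullet>c (dag U *\<^sub>v col U l)"
    using cscalar_prod_mult_dag[OF Uc y, of "col U l"] Uc l by simp
  also have "dag U *\<^sub>v col U l = unit_vec n l"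
    using col_mult2[OF dU Uc l] unitaryD(3)[OF U] l by simp
  finally show ?thesis
    using y l by (simp add: cscalar_prod_unit_vec)
qed

text \<open>In an orthonormal basis extending the eigenvectors \<open>us\<close>, the rows of \<open>A\<close> belonging to
  \<open>us\<close> are diagonal, so \<open>A\<close> has an eigenvector in the orthogonal complement of \<open>us\<close>.\<close>

lemma hermitian_exists_eigenvector_orthogonal:
  assumes A: "hermitian n A"
    and us: "set us \<subseteq> carrier_vec n" "orthonormal us" "length us < n"
    and ev: "\<forall>u\<in>set us. \<exists>c. A *\<^sub>v u = c \<cdot>\<^sub>v u"
  shows "\<exists>w \<in> carrier_vec n. w \<bullet>c w = 1 \<and> (\<forall>u\<in>set us. w \<bullet>c u = 0) \<and> (\<exists>c. A *\<^sub>v w = c \<cdot>\<^sub>v w)"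
proof -
  have Ac: "A \<in> carrier_mat n n"
    using A by (simp add: hermitian_def)
  define k where "k = length us"
  obtain ws where ws: "set ws \<subseteq> carrier_vec n" "orthonormal (us @ ws)" "length (us @ ws) = n"
    using orthonormal_extend[of us n] us by auto
  define U where "U = mat_of_cols n (us @ ws)"
  have U: "unitary n U"
    unfolding U_def using ws us by (intro unitary_mat_of_cols) auto
  note Uc = unitaryD(1)[OF U] and dU = unitaryD(2)[OF U]
  have colU: "col U l = us ! l" if "l < k" for l
  proof -
    have "(us @ ws) ! l = us ! l" "us ! l \<in> carrier_vec n"
      using that us by (auto simp: k_def nth_append)
    then show ?thesis
      using that by (simp add: U_def k_def)
  qed
  define B where "B = dag U * A * U"
  have "B $$ (i,j) = 0" if ij: "i < k" "k \<le> j" "j < n" for i j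
  proof -
    have "us ! i \<in> set us"
      using ij(1) by (simp add: k_def)
    then obtain c where "A *\<^sub>v col U i = c \<cdot>\<^sub>v col U i"
      using ev colU[OF ij(1)] by auto
    then show ?thesis
      unfolding B_def using hermitian_conj_row_eigenvector[OF A U] ij by simp
  qed
  moreover have B: "B \<in> carrier_mat n n" and "k < n"
    using Uc Ac us(3) by (simp_all add: B_def k_def)
  ultimately obtain y \<mu> where y: "y \<in> carrier_vec n" "y \<noteq> 0\<^sub>v n" "\<forall>i<k. y $ i = 0" "B *\<^sub>v y = \<mu> \<cdot>\<^sub>v y"
    using exists_eigenvector_vanishing_prefix by blast
  define v where "v = U *\<^sub>v y"
  have v: "v \<in> carrier_vec n"
    using Uc y by (simp add: v_def)
  have "A * U = U * B"
    using Uc Ac by (simp add: B_def assoc_mult_mat[of _ n n _ n _ n] unitary_cancel[OF U])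
  then have "A *\<^sub>v v = U *\<^sub>v (B *\<^sub>v y)"
    using Uc Ac B y by (simp add: v_def assoc_mult_mat_vec[of _ n n _ n, symmetric])
  then have Av: "A *\<^sub>v v = \<mu> \<cdot>\<^sub>v v"
    using Uc y by (simp add: v_def mult_mat_vec)
  have "dag U *\<^sub>v v = y"
    using Uc dU unitaryD(3)[OF U] y by (simp add: v_def assoc_mult_mat_vec[of _ n n _ n, symmetric])
  moreover have "dag U *\<^sub>v 0\<^sub>v n = 0\<^sub>v n"
    using Uc by (intro eq_vecI) (auto simp: scalar_prod_def)
  ultimately have "v \<noteq> 0\<^sub>v n"
    using y(2) by auto
  have orth: "v \<bullet>c u = 0" if u: "u \<in> set us" for u
  proof -
    obtain l where "l < k" "u = col U l"
      using u colU by (auto simp: in_set_conv_nth k_def)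
    then show ?thesis
      using unitary_mult_vec_cscalar_col[OF U y(1)] y(3) us(3) by (simp add: v_def k_def)
  qed
  obtain a where a: "(a \<cdot>\<^sub>v v) \<bullet>c (a \<cdot>\<^sub>v v) = 1"
    using exists_unit_multiple[OF v \<open>v \<noteq> 0\<^sub>v n\<close>] by blast
  have "(a \<cdot>\<^sub>v v) \<bullet>c u = 0" if "u \<in> set us" for u
    using that orth us v by (auto simp: cscalar_prod_smult_left)
  moreover have "A *\<^sub>v (a \<cdot>\<^sub>v v) = \<mu> \<cdot>\<^sub>v (a \<cdot>\<^sub>v v)"
    using Ac v Av by (simp add: mult_mat_vec smult_smult_assoc mult.commute)
  moreover have "a \<cdot>\<^sub>v v \<in> carrier_vec n"
    using v by simp
  ultimately show ?thesis
    using a by blast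
qed

lemma hermitian_orthonormal_eigenbasis:
  assumes "hermitian n A"
  shows "\<exists>us. set us \<subseteq> carrier_vec n \<and> orthonormal us \<and> length us = n \<and>
    (\<forall>u\<in>set us. \<exists>c. A *\<^sub>v u = c \<cdot>\<^sub>v u)"
proof -
  have "\<exists>us. set us \<subseteq> carrier_vec n \<and> orthonormal us \<and> length us = k \<and>
      (\<forall>u\<in>set us. \<exists>c. A *\<^sub>v u = c \<cdot>\<^sub>v u)" if "k \<le> n" for k
    using that
  proof (induct k)
    case 0
    show ?case
      by (intro exI[of _ "[]"]) (simp add: orthonormal_def)
  next
    case (Suc k)
    then obtain us where us: "set us \<subseteq> carrier_vec n" "orthonormal us" "length us = k"
      "\<forall>u\<in>set us. \<exists>c. A *\<^sub>v u = c \<cdot>\<^sub>v u"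
      by auto
    moreover obtain w where "w \<in> carrier_vec n" "w \<bullet>c w = 1" "\<forall>u\<in>set us. w \<bullet>c u = 0"
      "\<exists>c. A *\<^sub>v w = c \<cdot>\<^sub>v w"
      using hermitian_exists_eigenvector_orthogonal[OF assms us(1,2) _ us(4)] us(3) Suc.prems by auto
    ultimately show ?case
      using orthonormal_snoc[of us n w] by (intro exI[of _ "us @ [w]"]) auto
  qed
  then show ?thesis
    by blast
qed

definition diag_real :: "nat \<Rightarrow> (nat \<Rightarrow> real) \<Rightarrow> complex mat" where
  "diag_real n d = mat n n (\<lambda>(i,j). if i = j then complex_of_real (d i) else 0)"

lemma diag_real_dim [simp]: "dim_row (diag_real n d) = n" "dim_col (diag_real n d) = n"
  by (simp_all add: diag_real_def)

lemma diag_real_carrier [simp]: "diag_real n d \<in> carrier_mat n n"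
  by (simp add: carrier_matI)

lemma index_diag_real [simp]:
  "i < n \<Longrightarrow> j < n \<Longrightarrow> diag_real n d $$ (i,j) = (if i = j then complex_of_real (d i) else 0)"
  by (simp add: diag_real_def)

lemma dag_diag_real [simp]: "dag (diag_real n d) = diag_real n d"
  by (intro eq_matI) (auto simp: diag_real_def)

lemma mult_diag_real:
  assumes "U \<in> carrier_mat m n"
  shows "U * diag_real n d = mat m n (\<lambda>(i,j). U $$ (i,j) * complex_of_real (d j))"
proof (rule eq_matI)
  fix i j assume "i < dim_row (mat m n (\<lambda>(i,j). U $$ (i,j) * complex_of_real (d j)))"
    "j < dim_col (mat m n (\<lambda>(i,j). U $$ (i,j) * complex_of_real (d j)))"
  then have ij: "i < m" "j < n"
    by auto
  have "(U * diag_real n d) $$ (i,j) = (\<Sum>p<n. U $$ (i,p) * diag_real n d $$ (p,j))"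
    using assms ij by (subst index_mult_mat_sum) auto
  also have "\<dots> = (\<Sum>p<n. if p = j then U $$ (i,j) * complex_of_real (d j) else 0)"
    using ij by (intro sum.cong) auto
  finally show "(U * diag_real n d) $$ (i,j) = mat m n (\<lambda>(i,j). U $$ (i,j) * complex_of_real (d j)) $$ (i,j)"
    using ij by simp
qed (use assms in auto)

lemma diag_real_mult:
  assumes "W \<in> carrier_mat n m"
  shows "diag_real n d * W = mat n m (\<lambda>(i,j). complex_of_real (d i) * W $$ (i,j))"
proof (rule eq_matI)
  fix i j assume "i < dim_row (mat n m (\<lambda>(i,j). complex_of_real (d i) * W $$ (i,j)))"
    "j < dim_col (mat n m (\<lambda>(i,j). complex_of_real (d i) * W $$ (i,j)))"
  then have ij: "i < n" "j < m"
    by auto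
  have "(diag_real n d * W) $$ (i,j) = (\<Sum>p<n. diag_real n d $$ (i,p) * W $$ (p,j))"
    using assms ij by (subst index_mult_mat_sum) auto
  also have "\<dots> = (\<Sum>p<n. if p = i then complex_of_real (d i) * W $$ (i,j) else 0)"
    using ij by (intro sum.cong) auto
  finally show "(diag_real n d * W) $$ (i,j) = mat n m (\<lambda>(i,j). complex_of_real (d i) * W $$ (i,j)) $$ (i,j)"
    using ij by simp
qed (use assms in auto)

lemma diag_real_mult_diag_real: "diag_real n a * diag_real n b = diag_real n (\<lambda>l. a l * b l)"
  unfolding diag_real_mult[OF diag_real_carrier] by (intro eq_matI) (auto simp: diag_real_def)

lemma diag_real_mult_diag_real_mult:
  "X \<in> carrier_mat n n \<Longrightarrow> diag_real n a * (diag_real n b * X) = diag_real n (\<lambda>l. a l * b l) * X"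
  by (simp flip: assoc_mult_mat[of _ n n _ n X n] add: diag_real_mult_diag_real)

lemma diag_real_mult_vec:
  assumes "y \<in> carrier_vec n"
  shows "diag_real n d *\<^sub>v y = vec n (\<lambda>l. complex_of_real (d l) * y $ l)"
proof (rule eq_vecI)
  fix l assume "l < dim_vec (vec n (\<lambda>l. complex_of_real (d l) * y $ l))"
  then have l: "l < n"
    by simp
  have "(diag_real n d *\<^sub>v y) $ l = (\<Sum>p<n. diag_real n d $$ (l,p) * y $ p)"
    using assms l by (simp add: index_mult_mat_vec_sum del: index_mult_mat_vec)
  also have "\<dots> = (\<Sum>p<n. if p = l then complex_of_real (d l) * y $ l else 0)"
    using l by (intro sum.cong) auto
  finally show "(diag_real n d *\<^sub>v y) $ l = vec n (\<lambda>l. complex_of_real (d l) * y $ l) $ l"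
    using l by simp
qed (use assms in auto)

lemma hermitian_unitary_conj:
  assumes "unitary n U"
  shows "hermitian n (U * diag_real n d * dag U)"
proof -
  note U = unitaryD(1)[OF assms]
  have "dag (U * diag_real n d * dag U) = dag (dag U) * dag (U * diag_real n d)"
    using U by (intro dag_mult[of _ n n]) auto
  also have "dag (U * diag_real n d) = diag_real n d * dag U"
    using dag_mult[OF U diag_real_carrier] by simp
  finally show ?thesis
    using U by (simp add: hermitian_def assoc_mult_mat[of _ n n _ n _ n])
qed

lemma unitary_conj_col_eigen:
  assumes "unitary n U" "l < n"
  shows "(U * diag_real n d * dag U) *\<^sub>v col U l = complex_of_real (d l) \<cdot>\<^sub>v col U l"
proof -
  note U = unitaryD(1)[OF assms(1)] and UU = unitaryD(3)[OF assms(1)]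
  have "(U * diag_real n d * dag U) *\<^sub>v col U l = col ((U * diag_real n d * dag U) * U) l"
    using U assms(2) by (simp add: col_mult2[of _ n n U n])
  also have "(U * diag_real n d * dag U) * U = U * diag_real n d"
    using U UU by (simp add: assoc_mult_mat[of _ n n _ n _ n] right_mult_one_mat[of _ n n])
  also have "col (U * diag_real n d) l = complex_of_real (d l) \<cdot>\<^sub>v col U l"
    using U assms(2) by (intro eq_vecI) (auto simp: mult_diag_real mult.commute)
  finally show ?thesis .
qed

theorem hermitian_spectral:
  assumes A: "hermitian n A"
  shows "\<exists>U d. unitary n U \<and> A = U * diag_real n d * dag U"
proof -
  have Ac: "A \<in> carrier_mat n n"
    using A by (simp add: hermitian_def)
  obtain us where us: "set us \<subseteq> carrier_vec n" "orthonormal us" "length us = n"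
    "\<forall>u\<in>set us. \<exists>c. A *\<^sub>v u = c \<cdot>\<^sub>v u"
    using hermitian_orthonormal_eigenbasis[OF A] by blast
  define U where "U = mat_of_cols n us"
  have "unitary n U"
    unfolding U_def using us by (intro unitary_mat_of_cols) auto
  note U = unitaryD(1)[OF this] and dU = unitaryD(2)[OF this] and UU' = unitaryD(4)[OF this]
  have colU: "col U l = us ! l" "us ! l \<in> carrier_vec n" "us ! l \<noteq> 0\<^sub>v n" if "l < n" for l
  proof -
    show "us ! l \<in> carrier_vec n"
      using that us by auto
    then show "col U l = us ! l"
      using that us(3) by (simp add: U_def)
    have "us ! l \<bullet>c us ! l = 1"
      using us(2,3) that by (simp add: orthonormal_def)
    then show "us ! l \<noteq> 0\<^sub>v n"
      by auto
  qed
  have "\<forall>l<n. \<exists>c. A *\<^sub>v col U l = c \<cdot>\<^sub>v col U l"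
    using us(3,4) colU by auto
  then obtain c where c: "\<And>l. l < n \<Longrightarrow> A *\<^sub>v col U l = c l \<cdot>\<^sub>v col U l"
    by metis
  define d where "d l = Re (c l)" for l
  have eig: "A *\<^sub>v col U l = complex_of_real (d l) \<cdot>\<^sub>v col U l" if "l < n" for l
    using c[OF that] hermitian_eigenvector_eigenvalue_real[OF A _ _ c[OF that]] colU that by (simp add: d_def)
  have AU: "A * U = U * diag_real n d"
  proof (rule eq_matI)
    fix i j assume "i < dim_row (U * diag_real n d)" "j < dim_col (U * diag_real n d)"
    then have ij: "i < n" "j < n"
      using U by auto
    then have "(A * U) $$ (i,j) = (A *\<^sub>v col U j) $ i"
      using Ac U by simp
    then show "(A * U) $$ (i,j) = (U * diag_real n d) $$ (i,j)"
      using eig[OF ij(2)] U ij by (simp add: mult_diag_real mult.commute)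
  qed (use Ac U in auto)
  have "A = (A * U) * dag U"
    using Ac U dU UU' by (simp add: assoc_mult_mat[of _ n n _ n _ n] right_mult_one_mat[of _ n n])
  then have "A = U * diag_real n d * dag U"
    by (simp only: AU)
  then show ?thesis
    using \<open>unitary n U\<close> by blast
qed

section \<open>Extreme eigenvalues and Rayleigh quotients\<close>

definition spread :: "complex mat \<Rightarrow> real" where
  "spread M = lambda_max M - lambda_min M"

lemma eigenvalue_exists:
  fixes A :: "complex mat"
  assumes "A \<in> carrier_mat n n" "0 < n"
  shows "\<exists>k. eigenvalue A k"
  using exists_eigenvector[OF assms] assms(1) unfolding eigenvalue_def eigenvector_def by auto

lemma finite_eigenvalues:
  fixes A :: "complex mat"
  assumes "A \<in> carrier_mat n n"
  shows "finite {k. eigenvalue A k}"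
proof -
  have "char_poly A \<noteq> 0"
    using degree_monic_char_poly[OF assms] by auto
  then show ?thesis
    using poly_roots_finite eigenvalue_root_char_poly[OF assms] by simp
qed

lemma hermitian_eigenvalue_real:
  assumes "hermitian n A" "eigenvalue A k"
  shows "k = complex_of_real (Re k)"
  using assms hermitian_eigenvector_eigenvalue_real unfolding eigenvalue_def eigenvector_def hermitian_def
  by blast

lemma hermitian_extreme_eigenvalues:
  assumes A: "hermitian n A" and n: "0 < n"
  shows "eigenvalue A (complex_of_real (lambda_max A))" "eigenvalue A (complex_of_real (lambda_min A))"
    and "\<And>k. eigenvalue A k \<Longrightarrow> lambda_min A \<le> Re k \<and> Re k \<le> lambda_max A"
proof -
  let ?S = "Re ` {k. eigenvalue A k}"
  have Ac: "A \<in> carrier_mat n n"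
    using A by (simp add: hermitian_def)
  have fin: "finite ?S" and ne: "?S \<noteq> {}"
    using finite_eigenvalues[OF Ac] eigenvalue_exists[OF Ac n] by auto
  have "lambda_max A \<in> ?S" "lambda_min A \<in> ?S"
    unfolding lambda_max_def lambda_min_def using Max_in[OF fin ne] Min_in[OF fin ne] by auto
  then show "eigenvalue A (complex_of_real (lambda_max A))" "eigenvalue A (complex_of_real (lambda_min A))"
    using hermitian_eigenvalue_real[OF A] by (auto simp del: of_real_Re)
  show "lambda_min A \<le> Re k \<and> Re k \<le> lambda_max A" if "eigenvalue A k" for k
    unfolding lambda_max_def lambda_min_def using fin that by auto
qed

lemma hermitian_lambda_min_le_max:
  "hermitian n A \<Longrightarrow> 0 < n \<Longrightarrow> lambda_min A \<le> lambda_max A"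
  using hermitian_extreme_eigenvalues by fastforce

lemma unitary_conj_eigenvalue_bounds:
  assumes U: "unitary n U" and l: "l < n"
  shows "lambda_min (U * diag_real n d * dag U) \<le> d l \<and> d l \<le> lambda_max (U * diag_real n d * dag U)"
proof -
  have "col U l \<bullet>c col U l = 1"
    using unitary_cols_orthonormal[OF U l l] by simp
  then have "col U l \<noteq> 0\<^sub>v n"
    by auto
  then have "eigenvalue (U * diag_real n d * dag U) (complex_of_real (d l))"
    unfolding eigenvalue_def eigenvector_def using U l unitary_conj_col_eigen[OF U l]
    by (intro exI[of _ "col U l"]) (use unitaryD(1)[OF U] in auto)
  then show ?thesis
    using hermitian_extreme_eigenvalues(3)[OF hermitian_unitary_conj[OF U]] l by fastforce
qed

lemma eigenvalue_unit_eigenvector: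
  fixes A :: "complex mat"
  assumes A: "A \<in> carrier_mat n n" and "eigenvalue A k"
  shows "\<exists>v. v \<in> carrier_vec n \<and> v \<bullet>c v = 1 \<and> A *\<^sub>v v = k \<cdot>\<^sub>v v"
proof -
  obtain v where v: "v \<in> carrier_vec n" "v \<noteq> 0\<^sub>v n" "A *\<^sub>v v = k \<cdot>\<^sub>v v"
    using assms unfolding eigenvalue_def eigenvector_def by auto
  obtain c where "(c \<cdot>\<^sub>v v) \<bullet>c (c \<cdot>\<^sub>v v) = 1"
    using exists_unit_multiple[OF v(1,2)] by blast
  moreover have "A *\<^sub>v (c \<cdot>\<^sub>v v) = k \<cdot>\<^sub>v (c \<cdot>\<^sub>v v)"
    using A v by (simp add: mult_mat_vec smult_smult_assoc mult.commute)
  ultimately show ?thesis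
    using v(1) by (intro exI[of _ "c \<cdot>\<^sub>v v"]) simp
qed

lemma exists_orthonormal_extreme_eigenvectors:
  assumes M: "hermitian n M" and n: "0 < n" and gap: "lambda_min M < lambda_max M"
  shows "\<exists>a b. a \<in> carrier_vec n \<and> a \<bullet>c a = 1 \<and> b \<in> carrier_vec n \<and> b \<bullet>c b = 1 \<and> a \<bullet>c b = 0 \<and>
    M *\<^sub>v a = complex_of_real (lambda_max M) \<cdot>\<^sub>v a \<and> M *\<^sub>v b = complex_of_real (lambda_min M) \<cdot>\<^sub>v b"
proof -
  have Mc: "M \<in> carrier_mat n n"
    using M by (simp add: hermitian_def)
  obtain a where a: "a \<in> carrier_vec n" "a \<bullet>c a = 1" "M *\<^sub>v a = complex_of_real (lambda_max M) \<cdot>\<^sub>v a"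
    using eigenvalue_unit_eigenvector[OF Mc hermitian_extreme_eigenvalues(1)[OF M n]] by blast
  obtain b where b: "b \<in> carrier_vec n" "b \<bullet>c b = 1" "M *\<^sub>v b = complex_of_real (lambda_min M) \<cdot>\<^sub>v b"
    using eigenvalue_unit_eigenvector[OF Mc hermitian_extreme_eigenvalues(2)[OF M n]] by blast
  have "a \<bullet>c b = 0"
    using hermitian_eigenvectors_orthogonal[OF M a(1) b(1) a(3) b(3)] gap by simp
  then show ?thesis
    using a b by blast
qed

lemma diag_real_one: "diag_real n (\<lambda>_. 1) = 1\<^sub>m n"
  by (intro eq_matI) auto

lemma unitary_conj_quadratic_form:
  assumes U: "unitary n U" and v: "v \<in> carrier_vec n"
  shows "((U * diag_real n d * dag U) *\<^sub>v v) \<bullet>c v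
    = complex_of_real (\<Sum>l<n. d l * (cmod ((dag U *\<^sub>v v) $ l))\<^sup>2)"
proof -
  define y where "y = dag U *\<^sub>v v"
  note Uc = unitaryD(1)[OF U] and dU = unitaryD(2)[OF U]
  have y: "y \<in> carrier_vec n"
    using dU v by (simp add: y_def)
  have "(U * diag_real n d * dag U) *\<^sub>v v = U *\<^sub>v (diag_real n d *\<^sub>v y)"
    using assoc_mult_mat_vec[OF mult_carrier_mat[OF Uc diag_real_carrier] dU v]
      assoc_mult_mat_vec[OF Uc diag_real_carrier y] by (simp add: y_def)
  then have "((U * diag_real n d * dag U) *\<^sub>v v) \<bullet>c v = (diag_real n d *\<^sub>v y) \<bullet>c y"
    using cscalar_prod_mult_dag[OF Uc mult_mat_vec_carrier[OF diag_real_carrier y] v] by (simp add: y_def)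
  also have "\<dots> = (\<Sum>l<n. complex_of_real (d l) * (y $ l * cnj (y $ l)))"
    using y by (simp add: diag_real_mult_vec cscalar_prod_sum mult.assoc)
  finally show ?thesis
    by (simp add: y_def flip: complex_norm_square)
qed

lemma unitary_norm_preserving:
  assumes "unitary n U" "v \<in> carrier_vec n"
  shows "v \<bullet>c v = complex_of_real (\<Sum>l<n. (cmod ((dag U *\<^sub>v v) $ l))\<^sup>2)"
proof -
  have "U * diag_real n (\<lambda>_. 1) * dag U = 1\<^sub>m n"
    using unitaryD[OF assms(1)] by (simp add: diag_real_one right_mult_one_mat[of _ n n])
  then show ?thesis
    using unitary_conj_quadratic_form[OF assms, of "\<lambda>_. 1"] assms(2) by simp
qed

lemma hermitian_rayleigh_bounds:
  assumes M: "hermitian n M" and v: "v \<in> carrier_vec n"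
  shows "lambda_min M * Re (v \<bullet>c v) \<le> Re ((M *\<^sub>v v) \<bullet>c v)"
    and "Re ((M *\<^sub>v v) \<bullet>c v) \<le> lambda_max M * Re (v \<bullet>c v)"
proof -
  obtain U d where U: "unitary n U" and Md: "M = U * diag_real n d * dag U"
    using hermitian_spectral[OF M] by blast
  define w where "w l = (cmod ((dag U *\<^sub>v v) $ l))\<^sup>2" for l
  have w: "Re ((M *\<^sub>v v) \<bullet>c v) = (\<Sum>l<n. d l * w l)" "Re (v \<bullet>c v) = (\<Sum>l<n. w l)"
    using unitary_conj_quadratic_form[OF U v, of d] unitary_norm_preserving[OF U v]
    by (simp_all add: Md w_def)
  have b: "lambda_min M \<le> d l \<and> d l \<le> lambda_max M" if "l < n" for l
    using unitary_conj_eigenvalue_bounds[OF U that] by (simp add: Md)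
  show "lambda_min M * Re (v \<bullet>c v) \<le> Re ((M *\<^sub>v v) \<bullet>c v)"
    unfolding w sum_distrib_left using b by (intro sum_mono mult_right_mono) (auto simp: w_def)
  show "Re ((M *\<^sub>v v) \<bullet>c v) \<le> lambda_max M * Re (v \<bullet>c v)"
    unfolding w sum_distrib_left using b by (intro sum_mono mult_right_mono) (auto simp: w_def)
qed

section \<open>Positive square roots and the trace norm\<close>

lemma unitary_conj_mult:
  assumes U: "unitary n U"
  shows "(U * diag_real n a * dag U) * (U * diag_real n b * dag U) = U * diag_real n (\<lambda>l. a l * b l) * dag U"
  using unitaryD[OF U] unitary_cancel[OF U]
  by (simp add: assoc_mult_mat[of _ n n _ n _ n] diag_real_mult_diag_real_mult)

lemma psd_unitary_conj:
  assumes U: "unitary n U" and d: "\<forall>l<n. 0 \<le> d l"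
  shows "psd n (U * diag_real n d * dag U)"
  unfolding psd_def
proof (intro conjI ballI)
  show "U * diag_real n d * dag U \<in> carrier_mat n n" "dag (U * diag_real n d * dag U) = U * diag_real n d * dag U"
    using hermitian_unitary_conj[OF U] by (auto simp: hermitian_def)
  fix v :: "complex vec" assume v: "v \<in> carrier_vec n"
  show "Im (((U * diag_real n d * dag U) *\<^sub>v v) \<bullet>c v) = 0"
    "0 \<le> Re (((U * diag_real n d * dag U) *\<^sub>v v) \<bullet>c v)"
    unfolding unitary_conj_quadratic_form[OF U v] using d by (auto intro!: sum_nonneg)
qed

lemma psd_spectral:
  assumes T: "psd n T"
  shows "\<exists>V e. unitary n V \<and> T = V * diag_real n e * dag V \<and> (\<forall>l<n. 0 \<le> e l)"
proof -
  obtain V e where V: "unitary n V" and Te: "T = V * diag_real n e * dag V"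
    using hermitian_spectral[of n T] T by (auto simp: psd_def hermitian_def)
  have "0 \<le> e l" if l: "l < n" for l
  proof -
    have c: "col V l \<in> carrier_vec n"
      using unitaryD(1)[OF V] l by simp
    have "(T *\<^sub>v col V l) \<bullet>c col V l = complex_of_real (e l)"
      using unitary_conj_col_eigen[OF V l, of e] unitary_cols_orthonormal[OF V l l] c
      by (simp add: Te cscalar_prod_smult_left)
    moreover have "0 \<le> Re ((T *\<^sub>v col V l) \<bullet>c col V l)"
      using T c unfolding psd_def by blast
    ultimately show ?thesis
      by simp
  qed
  then show ?thesis
    using V Te by blast
qed

text \<open>If \<open>T = V e V\<^sup>\<dagger>\<close> with \<open>e \<ge> 0\<close> and \<open>T\<^sup>2 = U d\<^sup>2 U\<^sup>\<dagger>\<close>, then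
  \<open>W = U\<^sup>\<dagger> V\<close> intertwines \<open>d\<^sup>2\<close> and \<open>e\<^sup>2\<close>, hence entrywise also \<open>|d|\<close> and \<open>e\<close>.\<close>

lemma psd_sqrt_unique:
  assumes U: "unitary n U" and T: "psd n T" and TT: "T * T = U * diag_real n (\<lambda>l. (d l)\<^sup>2) * dag U"
  shows "T = U * diag_real n (\<lambda>l. \<bar>d l\<bar>) * dag U"
proof -
  obtain V e where V: "unitary n V" and Te: "T = V * diag_real n e * dag V" and e: "\<forall>l<n. 0 \<le> e l"
    using psd_spectral[OF T] by blast
  note simps = assoc_mult_mat[of _ n n _ n _ n] unitaryD[OF U] unitaryD[OF V]
    unitary_cancel[OF U] unitary_cancel[OF V] diag_real_mult_diag_real_mult
    right_mult_one_mat[OF unitaryD(2)[OF U]] right_mult_one_mat[OF unitaryD(2)[OF V]]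
  define W where "W = dag U * V"
  have W: "W \<in> carrier_mat n n"
    using unitaryD[OF U] unitaryD[OF V] by (simp add: W_def)
  have "T * T = V * diag_real n (\<lambda>l. (e l)\<^sup>2) * dag V"
    using unitary_conj_mult[OF V, of e e] by (simp add: Te power2_eq_square)
  then have "dag U * (U * diag_real n (\<lambda>l. (d l)\<^sup>2) * dag U) * V
      = dag U * (V * diag_real n (\<lambda>l. (e l)\<^sup>2) * dag V) * V"
    by (simp flip: TT)
  then have sq: "diag_real n (\<lambda>l. (d l)\<^sup>2) * W = W * diag_real n (\<lambda>l. (e l)\<^sup>2)"
    unfolding W_def by (simp add: simps)
  have abs: "diag_real n (\<lambda>l. \<bar>d l\<bar>) * W = W * diag_real n e"
  proof (rule eq_matI)
    fix i j assume "i < dim_row (W * diag_real n e)" "j < dim_col (W * diag_real n e)"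
    then have ij: "i < n" "j < n"
      using W by auto
    have "complex_of_real ((d i)\<^sup>2) * W $$ (i,j) = W $$ (i,j) * complex_of_real ((e j)\<^sup>2)"
      using arg_cong[OF sq, of "\<lambda>Z. Z $$ (i,j)"] ij W by (simp add: diag_real_mult mult_diag_real)
    then have "W $$ (i,j) = 0 \<or> (d i)\<^sup>2 = (e j)\<^sup>2"
      by (auto simp: mult.commute simp del: of_real_power)
    then have "W $$ (i,j) = 0 \<or> \<bar>d i\<bar> = e j"
      using e ij(2) by (metis abs_of_nonneg real_sqrt_abs)
    then have "complex_of_real \<bar>d i\<bar> * W $$ (i,j) = W $$ (i,j) * complex_of_real (e j)"
      by (auto simp: mult.commute)
    then show "(diag_real n (\<lambda>l. \<bar>d l\<bar>) * W) $$ (i,j) = (W * diag_real n e) $$ (i,j)"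
      using ij W by (simp add: diag_real_mult mult_diag_real)
  qed (use W in auto)
  have "T = U * (diag_real n (\<lambda>l. \<bar>d l\<bar>) * W) * dag V"
    unfolding abs by (simp add: Te W_def simps)
  then show ?thesis
    by (simp add: W_def simps)
qed

lemma mtrace_unitary_conj:
  assumes U: "unitary n U"
  shows "mtrace (U * diag_real n d * dag U) = complex_of_real (\<Sum>l<n. d l)"
proof -
  have "mtrace (U * diag_real n d * dag U) = mtrace (dag U * (U * diag_real n d))"
    using unitaryD[OF U] by (intro mtrace_mult_comm[of _ n n]) auto
  also have "\<dots> = mtrace (diag_real n d)"
    using unitary_cancel(1)[OF U diag_real_carrier] by simp
  finally show ?thesis
    by (simp add: mtrace_def)
qed

lemma mabs_eq_psd_sqrt:
  assumes X: "hermitian n X" and T: "psd n T" "T * T = X * X"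
  shows "mabs X = T"
proof -
  obtain U d where U: "unitary n U" and Xd: "X = U * diag_real n d * dag U"
    using hermitian_spectral[OF X] by blast
  define S where "S = U * diag_real n (\<lambda>l. \<bar>d l\<bar>) * dag U"
  have hX: "dag X = X" and dX: "dim_col X = n"
    using X by (auto simp: hermitian_def)
  have XX: "X * X = U * diag_real n (\<lambda>l. (d l)\<^sup>2) * dag U"
    using unitary_conj_mult[OF U, of d d] by (simp add: Xd power2_eq_square)
  have uniq: "T' = S" if "psd n T'" "T' * T' = dag X * X" for T'
    using psd_sqrt_unique[OF U that(1)] that(2) hX XX by (simp add: S_def)
  have "psd n S" "S * S = dag X * X"
    using psd_unitary_conj[OF U, of "\<lambda>l. \<bar>d l\<bar>"] unitary_conj_mult[OF U] hX XX
    by (simp_all add: S_def abs_mult_self_eq power2_eq_square)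
  then have "mabs X = S"
    unfolding mabs_def dX using uniq by (intro the_equality) blast+
  then show ?thesis
    using uniq T hX by simp
qed

lemma trace_norm_unitary_conj:
  assumes U: "unitary n U"
  shows "trace_norm (U * diag_real n d * dag U) = (\<Sum>l<n. \<bar>d l\<bar>)"
proof -
  have "mabs (U * diag_real n d * dag U) = U * diag_real n (\<lambda>l. \<bar>d l\<bar>) * dag U"
    using hermitian_unitary_conj[OF U] psd_unitary_conj[OF U, of "\<lambda>l. \<bar>d l\<bar>"] unitary_conj_mult[OF U]
    by (intro mabs_eq_psd_sqrt) (simp_all add: abs_mult_self_eq)
  then show ?thesis
    by (simp add: trace_norm_def mtrace_unitary_conj[OF U])
qed

lemma sum_mult_zero_sum_le:
  fixes m d :: "'i \<Rightarrow> real"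
  assumes "(\<Sum>l\<in>L. d l) = 0" and "\<And>l. l \<in> L \<Longrightarrow> a \<le> m l \<and> m l \<le> b"
  shows "(\<Sum>l\<in>L. m l * d l) \<le> (b - a) / 2 * (\<Sum>l\<in>L. \<bar>d l\<bar>)"
proof -
  have "(\<Sum>l\<in>L. m l * d l) = (\<Sum>l\<in>L. (m l - (a + b) / 2) * d l) + (a + b) / 2 * (\<Sum>l\<in>L. d l)"
    by (simp add: sum_distrib_left left_diff_distrib sum_subtractf)
  also have "\<dots> = (\<Sum>l\<in>L. (m l - (a + b) / 2) * d l)"
    using assms(1) by simp
  also have "\<dots> \<le> (\<Sum>l\<in>L. (b - a) / 2 * \<bar>d l\<bar>)"
  proof (rule sum_mono)
    fix l assume "l \<in> L"
    then have "a \<le> m l" "m l \<le> b"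
      using assms(2) by auto
    then have "\<bar>m l - (a + b) / 2\<bar> \<le> (b - a) / 2"
      unfolding abs_le_iff by (auto simp: field_simps)
    then have "\<bar>m l - (a + b) / 2\<bar> * \<bar>d l\<bar> \<le> (b - a) / 2 * \<bar>d l\<bar>"
      by (rule mult_right_mono) simp
    then show "(m l - (a + b) / 2) * d l \<le> (b - a) / 2 * \<bar>d l\<bar>"
      by (metis abs_ge_self abs_mult order_trans)
  qed
  finally show ?thesis
    by (simp add: sum_distrib_left)
qed

text \<open>In the eigenbasis \<open>u_l\<close> of the traceless matrix the trace is \<open>\<Sum>_l d_l \<langle>M u_l, u_l\<rangle>\<close>,
  and every Rayleigh quotient \<open>\<langle>M u_l, u_l\<rangle>\<close> lies in \<open>[\<lambda>_min, \<lambda>_max]\<close>.\<close>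

lemma mtrace_mult_traceless_le:
  assumes M: "hermitian n M" and U: "unitary n U" and tr0: "(\<Sum>l<n. d l) = 0"
  shows "Re (mtrace (M * (U * diag_real n d * dag U))) \<le> spread M / 2 * (\<Sum>l<n. \<bar>d l\<bar>)"
proof -
  have Mc: "M \<in> carrier_mat n n"
    using M by (simp add: hermitian_def)
  note Uc = unitaryD[OF U]
  define m where "m l = Re ((M *\<^sub>v col U l) \<bullet>c col U l)" for l
  have "mtrace (M * (U * diag_real n d * dag U)) = mtrace ((dag U * M * U) * diag_real n d)"
    using Mc Uc by (simp add: mtrace_mult_sandwich)
  also have "\<dots> = (\<Sum>l<n. ((M *\<^sub>v col U l) \<bullet>c col U l) * complex_of_real (d l))"
  proof -
    have B: "dag U * M * U \<in> carrier_mat n n"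
      using Mc Uc by simp
    show ?thesis
      unfolding mult_diag_real[OF B] mtrace_def using Mc Uc
      by (simp add: index_dag_mult_mult del: index_mult_mat(1))
  qed
  finally have "Re (mtrace (M * (U * diag_real n d * dag U))) = (\<Sum>l<n. m l * d l)"
    by (simp add: m_def Re_sum)
  moreover have "lambda_min M \<le> m l \<and> m l \<le> lambda_max M" if "l < n" for l
    using hermitian_rayleigh_bounds[OF M, of "col U l"] unitary_cols_orthonormal[OF U that that] Uc that
    by (simp add: m_def)
  ultimately show ?thesis
    using sum_mult_zero_sum_le[of d "{..<n}" "lambda_min M" m "lambda_max M"] tr0 by (simp add: spread_def)
qed

section \<open>Decision models in the Heisenberg picture\<close>

definition effect :: "nat \<Rightarrow> complex mat list \<Rightarrow> complex mat list \<Rightarrow> nat \<Rightarrow> complex mat" where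
  "effect n Es Ms i = adj_channel n Es (dag (Ms ! i) * Ms ! i)"

lemma decision_modelD:
  assumes "decision_model n Es Ms"
  shows "\<And>E. E \<in> set Es \<Longrightarrow> E \<in> carrier_mat n n" "\<And>i. i < length Ms \<Longrightarrow> Ms ! i \<in> carrier_mat n n"
    "msum n (map (\<lambda>E. dag E * E) Es) = 1\<^sub>m n" "msum n (map (\<lambda>M. dag M * M) Ms) = 1\<^sub>m n"
  using assms unfolding decision_model_def by auto

lemma mtrace_kraus_sum:
  assumes Es: "\<And>E. E \<in> set Es \<Longrightarrow> E \<in> carrier_mat n n" and tp: "msum n (map (\<lambda>E. dag E * E) Es) = 1\<^sub>m n"
    and R: "R \<in> carrier_mat n n"
  shows "(\<Sum>E\<leftarrow>Es. mtrace (E * R * dag E)) = mtrace R"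
proof -
  have "(\<Sum>E\<leftarrow>Es. mtrace (E * R * dag E)) = (\<Sum>E\<leftarrow>Es. mtrace (dag E * E * R))"
  proof (intro arg_cong[of _ _ sum_list] map_cong refl)
    fix E assume "E \<in> set Es"
    then have E: "E \<in> carrier_mat n n"
      by (rule Es)
    then have "mtrace (E * R * dag E) = mtrace (dag E * (E * R))"
      using R by (intro mtrace_mult_comm[of _ n n]) auto
    then show "mtrace (E * R * dag E) = mtrace (dag E * E * R)"
      using E R by (simp add: assoc_mult_mat[of _ n n _ n _ n])
  qed
  also have "\<dots> = mtrace (msum n (map (\<lambda>E. dag E * E) Es) * R)"
    using Es R by (simp add: mtrace_mult_msum_right)
  finally show ?thesis
    using R tp by simp
qed

lemma channel_carrier:
  "(\<And>E. E \<in> set Es \<Longrightarrow> E \<in> carrier_mat n n) \<Longrightarrow> R \<in> carrier_mat n n \<Longrightarrow> channel n Es R \<in> carrier_mat n n"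
  unfolding channel_def by (intro msum_carrier) auto

lemma hermitian_adj_channel:
  assumes Es: "\<And>E. E \<in> set Es \<Longrightarrow> E \<in> carrier_mat n n" and Q: "hermitian n Q"
  shows "hermitian n (adj_channel n Es Q)"
proof -
  have Qc: "Q \<in> carrier_mat n n" and hQ: "dag Q = Q"
    using Q by (auto simp: hermitian_def)
  have "dag (adj_channel n Es Q) = msum n (map (\<lambda>E. dag (dag E * Q * E)) Es)"
    unfolding adj_channel_def using Es Qc by (subst dag_msum) (auto simp: comp_def)
  also have "\<dots> = adj_channel n Es Q"
    unfolding adj_channel_def using dag_mult_dag[OF Es Qc] hQ by (intro arg_cong[of _ _ "msum n"] map_cong) simp_all
  finally show ?thesis
    unfolding hermitian_def adj_channel_def using Es Qc by (auto intro!: msum_carrier)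
qed

lemma hermitian_effect:
  assumes "decision_model n Es Ms" "i < length Ms"
  shows "hermitian n (effect n Es Ms i)"
proof -
  have M: "Ms ! i \<in> carrier_mat n n"
    using decision_modelD(2)[OF assms] .
  then have "hermitian n (dag (Ms ! i) * Ms ! i)"
    using dag_mult[of "dag (Ms ! i)" n n "Ms ! i" n] by (simp add: hermitian_def)
  then show ?thesis
    unfolding effect_def using decision_modelD(1)[OF assms(1)] by (blast intro: hermitian_adj_channel)
qed

lemma model_out_effect:
  assumes model: "decision_model n Es Ms" and i: "i < length Ms" and R: "R \<in> carrier_mat n n"
  shows "model_out n Es Ms R i = Re (mtrace (effect n Es Ms i * R))"
proof -
  note Es = decision_modelD(1)[OF model]
  define M where "M = Ms ! i"
  define Q where "Q = dag M * M"
  have M: "M \<in> carrier_mat n n" and Q: "Q \<in> carrier_mat n n"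
    using decision_modelD(2)[OF model i] by (simp_all add: M_def Q_def)
  have C: "channel n Es R \<in> carrier_mat n n"
    using channel_carrier[OF Es R] .
  have "mtrace (M * channel n Es R * dag M) = mtrace (dag M * (M * channel n Es R))"
    using M C by (intro mtrace_mult_comm[of _ n n]) auto
  also have "\<dots> = mtrace (Q * channel n Es R)"
    using M C by (simp add: Q_def assoc_mult_mat[of _ n n _ n _ n])
  also have "\<dots> = (\<Sum>E\<leftarrow>Es. mtrace (Q * (E * R * dag E)))"
    unfolding channel_def using Q Es R by (simp add: mtrace_mult_msum_left)
  also have "\<dots> = (\<Sum>E\<leftarrow>Es. mtrace (dag E * Q * E * R))"
    using Q Es R by (intro arg_cong[of _ _ sum_list] map_cong refl mtrace_mult_sandwich) auto
  also have "\<dots> = mtrace (adj_channel n Es Q * R)"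
    unfolding adj_channel_def using Q Es R by (simp add: mtrace_mult_msum_right)
  finally show ?thesis
    by (simp add: model_out_def effect_def M_def Q_def)
qed

lemma sum_model_out:
  assumes model: "decision_model n Es Ms" and R: "R \<in> carrier_mat n n"
  shows "(\<Sum>i<length Ms. model_out n Es Ms R i) = Re (mtrace R)"
proof -
  note Es = decision_modelD(1,3)[OF model]
  have "\<And>M. M \<in> set Ms \<Longrightarrow> M \<in> carrier_mat n n" and "msum n (map (\<lambda>M. dag M * M) Ms) = 1\<^sub>m n"
    using model by (auto simp: decision_model_def)
  then have "(\<Sum>M\<leftarrow>Ms. mtrace (M * channel n Es R * dag M)) = mtrace (channel n Es R)"
    using channel_carrier[OF Es(1) R] by (rule mtrace_kraus_sum)
  also have "\<dots> = (\<Sum>E\<leftarrow>Es. mtrace (E * R * dag E))"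
    unfolding channel_def using Es R by (subst mtrace_msum) (auto simp: comp_def)
  also have "\<dots> = mtrace R"
    using mtrace_kraus_sum[OF Es R] .
  finally have "(\<Sum>i<length Ms. mtrace (Ms ! i * channel n Es R * dag (Ms ! i))) = mtrace R"
    by (simp add: sum_list_sum_nth atLeast0LessThan)
  then show ?thesis
    by (simp add: model_out_def flip: Re_sum)
qed

lemma M_set_eq_msum_effect: "M_set n Es Ms A = msum n (map (effect n Es Ms) (sorted_list_of_set A))"
  unfolding M_set_def effect_def[abs_def] ..

lemma hermitian_M_set:
  assumes "decision_model n Es Ms" "A \<subseteq> {..<length Ms}"
  shows "hermitian n (M_set n Es Ms A)"
  unfolding M_set_eq_msum_effect using assms hermitian_effect finite_subset[OF assms(2)]
  by (intro hermitian_msum) auto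

lemma mtrace_M_set_mult:
  assumes "decision_model n Es Ms" "A \<subseteq> {..<length Ms}" "X \<in> carrier_mat n n"
  shows "mtrace (M_set n Es Ms A * X) = (\<Sum>i\<in>A. mtrace (effect n Es Ms i * X))"
proof -
  have "finite A"
    using assms(2) finite_subset by blast
  moreover have "mtrace (M_set n Es Ms A * X) = (\<Sum>i\<leftarrow>sorted_list_of_set A. mtrace (effect n Es Ms i * X))"
    unfolding M_set_eq_msum_effect using assms \<open>finite A\<close> hermitian_effect
    by (intro mtrace_mult_msum_right) (auto simp: hermitian_def)
  ultimately show ?thesis
    by (simp add: sum_list_distinct_conv_sum_set)
qed

section \<open>Pure states and the total variation distance\<close>

lemma tv_dist_eq_sum_increase:
  fixes p q :: "nat \<Rightarrow> real"
  assumes z: "(\<Sum>i<m. p i - q i) = 0"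
  shows "tv_dist m p q = (\<Sum>i\<in>{i. i < m \<and> q i \<le> p i}. p i - q i)"
proof -
  let ?P = "{i. i < m \<and> q i \<le> p i}" and ?N = "{i. i < m \<and> \<not> q i \<le> p i}"
  have split: "(\<Sum>i<m. f i) = (\<Sum>i\<in>?P. f i) + (\<Sum>i\<in>?N. f i)" for f :: "nat \<Rightarrow> real"
    by (subst sum.union_disjoint[symmetric]) (auto intro: sum.cong)
  have "(\<Sum>i\<in>?P. \<bar>p i - q i\<bar>) = (\<Sum>i\<in>?P. p i - q i)" "(\<Sum>i\<in>?N. \<bar>p i - q i\<bar>) = - (\<Sum>i\<in>?N. p i - q i)"
    by (auto simp: sum_negf[symmetric] intro: sum.cong)
  then show ?thesis
    using z split[of "\<lambda>i. p i - q i"] split[of "\<lambda>i. \<bar>p i - q i\<bar>"] by (simp add: tv_dist_def)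
qed

lemma sum_le_tv_dist:
  fixes p q :: "nat \<Rightarrow> real"
  assumes z: "(\<Sum>i<m. p i - q i) = 0" and A: "A \<subseteq> {..<m}"
  shows "(\<Sum>i\<in>A. p i - q i) \<le> tv_dist m p q"
proof -
  let ?B = "{..<m} - A"
  have split: "(\<Sum>i<m. f i) = (\<Sum>i\<in>A. f i) + (\<Sum>i\<in>?B. f i)" for f :: "nat \<Rightarrow> real"
    using A finite_subset[OF A] by (subst sum.union_disjoint[symmetric]) (auto intro: sum.cong)
  have "(\<Sum>i\<in>A. p i - q i) \<le> (\<Sum>i\<in>A. \<bar>p i - q i\<bar>)" "- (\<Sum>i\<in>?B. p i - q i) \<le> (\<Sum>i\<in>?B. \<bar>p i - q i\<bar>)"
    by (auto simp: sum_negf[symmetric] intro: sum_mono)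
  then show ?thesis
    using z split[of "\<lambda>i. p i - q i"] split[of "\<lambda>i. \<bar>p i - q i\<bar>"] by (simp add: tv_dist_def)
qed

lemma proj_carrier [simp]: "v \<in> carrier_vec n \<Longrightarrow> proj v \<in> carrier_mat n n"
  by (simp add: proj_def carrier_matI)

lemma mtrace_proj: "v \<in> carrier_vec n \<Longrightarrow> mtrace (proj v) = v \<bullet>c v"
  by (simp add: proj_def mtrace_def cscalar_prod_sum)

lemma mtrace_mult_proj:
  assumes F: "F \<in> carrier_mat n n" and a: "a \<in> carrier_vec n"
  shows "mtrace (F * proj a) = (F *\<^sub>v a) \<bullet>c a"
proof -
  have "mtrace (F * proj a) = (\<Sum>i<n. \<Sum>k<n. F $$ (i,k) * (a $ k * cnj (a $ i)))"
    using F a by (simp add: mtrace_def index_mult_mat_sum proj_def del: index_mult_mat(1))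
  also have "\<dots> = (\<Sum>i<n. (\<Sum>k<n. F $$ (i,k) * a $ k) * cnj (a $ i))"
    by (simp add: sum_distrib_left sum_distrib_right ac_simps)
  also have "\<dots> = (F *\<^sub>v a) \<bullet>c a"
    using F a by (simp add: cscalar_prod_sum index_mult_mat_vec_sum del: index_mult_mat_vec)
  finally show ?thesis .
qed

lemma proj_mult:
  assumes "a \<in> carrier_vec n" "b \<in> carrier_vec n"
  shows "proj a * proj b = (b \<bullet>c a) \<cdot>\<^sub>m mat n n (\<lambda>(i,j). a $ i * cnj (b $ j))"
proof (rule eq_matI)
  fix i j assume "i < dim_row ((b \<bullet>c a) \<cdot>\<^sub>m mat n n (\<lambda>(i,j). a $ i * cnj (b $ j)))"
    "j < dim_col ((b \<bullet>c a) \<cdot>\<^sub>m mat n n (\<lambda>(i,j). a $ i * cnj (b $ j)))"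
  then have ij: "i < n" "j < n"
    by auto
  have "(proj a * proj b) $$ (i,j) = (\<Sum>k<n. a $ i * cnj (a $ k) * (b $ k * cnj (b $ j)))"
    using assms ij by (simp add: index_mult_mat_sum proj_def del: index_mult_mat(1))
  also have "\<dots> = (b \<bullet>c a) * (a $ i * cnj (b $ j))"
    using assms by (simp add: cscalar_prod_sum sum_distrib_left sum_distrib_right ac_simps)
  finally show "(proj a * proj b) $$ (i,j) = ((b \<bullet>c a) \<cdot>\<^sub>m mat n n (\<lambda>(i,j). a $ i * cnj (b $ j))) $$ (i,j)"
    using ij by simp
qed (use assms in \<open>auto simp: proj_def\<close>)

lemma dag_proj: "v \<in> carrier_vec n \<Longrightarrow> dag (proj v) = proj v"
  by (intro eq_matI) (auto simp: proj_def)

lemma psd_proj: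
  assumes a: "a \<in> carrier_vec n"
  shows "psd n (proj a)"
  unfolding psd_def
proof (intro conjI ballI)
  show "proj a \<in> carrier_mat n n"
    using a by simp
  show "dag (proj a) = proj a"
    using a by (rule dag_proj)
  fix w :: "complex vec" assume w: "w \<in> carrier_vec n"
  have "(proj a *\<^sub>v w) \<bullet>c w = mtrace (proj a * proj w)"
    using mtrace_mult_proj[of "proj a" n w] a w by simp
  also have "\<dots> = (w \<bullet>c a) * (a \<bullet>c w)"
    using a w by (simp add: proj_mult[OF a w] mtrace_def cscalar_prod_sum sum_distrib_left)
  also have "\<dots> = complex_of_real ((cmod (w \<bullet>c a))\<^sup>2)"
    using a w cscalar_prod_swap[of a w] by (simp flip: complex_norm_square)
  finally show "Im ((proj a *\<^sub>v w) \<bullet>c w) = 0" "0 \<le> Re ((proj a *\<^sub>v w) \<bullet>c w)"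
    by simp_all
qed

lemma psd_add:
  assumes P: "psd n P" and Q: "psd n Q"
  shows "psd n (P + Q)"
  unfolding psd_def
proof (intro conjI ballI)
  have Pc: "P \<in> carrier_mat n n" and Qc: "Q \<in> carrier_mat n n"
    using P Q by (auto simp: psd_def)
  then show "P + Q \<in> carrier_mat n n" "dag (P + Q) = P + Q"
    using P Q dag_add[OF Pc Qc] by (auto simp: psd_def)
  fix w :: "complex vec" assume w: "w \<in> carrier_vec n"
  then have "((P + Q) *\<^sub>v w) \<bullet>c w = (P *\<^sub>v w) \<bullet>c w + (Q *\<^sub>v w) \<bullet>c w"
    using Pc Qc by (simp add: add_mult_distrib_mat_vec[OF Pc Qc w] add_scalar_prod_distrib[of _ n])
  then show "Im (((P + Q) *\<^sub>v w) \<bullet>c w) = 0" "0 \<le> Re (((P + Q) *\<^sub>v w) \<bullet>c w)"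
    using P Q w by (auto simp: psd_def)
qed

lemma density_proj: "a \<in> carrier_vec n \<Longrightarrow> a \<bullet>c a = 1 \<Longrightarrow> density n (proj a)"
  by (simp add: density_def psd_proj mtrace_proj)

text \<open>For orthonormal \<open>a, b\<close> the difference \<open>P - Q\<close> of the projectors squares to the
  projector \<open>P + Q\<close>, which is therefore \<open>|P - Q|\<close>.\<close>

lemma trace_dist_orthonormal_proj:
  assumes a: "a \<in> carrier_vec n" and b: "b \<in> carrier_vec n"
    and aa: "a \<bullet>c a = 1" and bb: "b \<bullet>c b = 1" and ab: "a \<bullet>c b = 0"
  shows "trace_dist (proj a) (proj b) = 1"
proof -
  define P where "P = proj a"
  define Q where "Q = proj b"
  have P: "P \<in> carrier_mat n n" and Q: "Q \<in> carrier_mat n n"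
    using a b by (simp_all add: P_def Q_def)
  have "b \<bullet>c a = 0"
    using ab cscalar_prod_swap[of b a] a b by simp
  then have PP: "P * P = P" and QQ: "Q * Q = Q" and PQ: "P * Q = 0\<^sub>m n n" and QP: "Q * P = 0\<^sub>m n n"
    using a b aa bb ab by (simp_all add: P_def Q_def proj_mult[of _ n]) (auto simp: proj_def)
  have PQc: "P - Q \<in> carrier_mat n n"
    using Q by (rule minus_carrier_mat)
  have "(P - Q) * (P - Q) = P * (P - Q) - Q * (P - Q)"
    using minus_mult_distrib_mat[OF P Q PQc] .
  also have "\<dots> = (P * P - P * Q) - (Q * P - Q * Q)"
    using mult_minus_distrib_mat[OF P P Q] mult_minus_distrib_mat[OF Q P Q] by simp
  also have "\<dots> = P + Q"
    unfolding PP QQ PQ QP using P Q by (intro eq_matI) auto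
  also have "\<dots> = (P * P + P * Q) + (Q * P + Q * Q)"
    unfolding PP QQ PQ QP using P Q by (intro eq_matI) auto
  also have "\<dots> = (P + Q) * (P + Q)"
    using add_mult_distrib_mat[OF P Q, of "P + Q" n] mult_add_distrib_mat[OF P P Q]
      mult_add_distrib_mat[OF Q P Q] P Q by simp
  finally have "mabs (P - Q) = P + Q"
    using P Q dag_minus[OF P Q] dag_proj a b psd_add[OF psd_proj[OF a] psd_proj[OF b]]
    by (intro mabs_eq_psd_sqrt) (auto simp: hermitian_def P_def Q_def minus_carrier_mat)
  then show ?thesis
    using mtrace_add[OF P Q] mtrace_proj[OF a] mtrace_proj[OF b] aa bb
    by (simp add: trace_dist_def trace_norm_def P_def Q_def)
qed

section \<open>The Lipschitz constant\<close>

lemma density_diff_spectral: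
  assumes R: "density n R" and S: "density n S"
  shows "\<exists>U d. unitary n U \<and> R - S = U * diag_real n d * dag U \<and> (\<Sum>l<n. d l) = 0 \<and>
    trace_dist R S = (\<Sum>l<n. \<bar>d l\<bar>) / 2"
proof -
  have Rc: "R \<in> carrier_mat n n" "dag R = R" "mtrace R = 1"
    and Sc: "S \<in> carrier_mat n n" "dag S = S" "mtrace S = 1"
    using R S by (auto simp: density_def psd_def)
  then have "hermitian n (R - S)"
    using dag_minus[OF Rc(1) Sc(1)] by (simp add: hermitian_def minus_carrier_mat)
  then obtain U d where U: "unitary n U" and X: "R - S = U * diag_real n d * dag U"
    using hermitian_spectral by blast
  have "complex_of_real (\<Sum>l<n. d l) = 0"
    using mtrace_minus[OF Rc(1) Sc(1)] Rc(3) Sc(3) mtrace_unitary_conj[OF U, of d] X by simp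
  then have "(\<Sum>l<n. d l) = 0"
    by (simp only: of_real_eq_0_iff)
  moreover have "trace_dist R S = (\<Sum>l<n. \<bar>d l\<bar>) / 2"
    using trace_norm_unitary_conj[OF U, of d] X by (simp add: trace_dist_def)
  ultimately show ?thesis
    using U X by (intro exI[of _ U] exI[of _ d]) simp
qed

lemma trace_dist_density_nonneg:
  assumes "density n R" "density n S"
  shows "0 \<le> trace_dist R S"
proof -
  obtain d where td: "trace_dist R S = (\<Sum>l<n. \<bar>d l\<bar>) / 2"
    using density_diff_spectral[OF assms] by blast
  have "0 \<le> (\<Sum>l<n. \<bar>d l\<bar>)"
    by (simp add: sum_nonneg)
  then show ?thesis
    unfolding td by simp
qed

lemma sum_model_out_diff:
  assumes model: "decision_model n Es Ms" and R: "density n R" and S: "density n S"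
  shows "(\<Sum>i<length Ms. model_out n Es Ms R i - model_out n Es Ms S i) = 0"
  using sum_model_out[OF model, of R] sum_model_out[OF model, of S] R S
  by (simp add: sum_subtractf density_def psd_def)

lemma tv_dist_le_spread:
  assumes model: "decision_model n Es Ms" and R: "density n R" and S: "density n S"
  shows "\<exists>A \<subseteq> {..<length Ms}. tv_dist (length Ms) (model_out n Es Ms R) (model_out n Es Ms S)
    \<le> spread (M_set n Es Ms A) * trace_dist R S"
proof -
  obtain U d where U: "unitary n U" and X: "R - S = U * diag_real n d * dag U"
    and d0: "(\<Sum>l<n. d l) = 0" and td: "trace_dist R S = (\<Sum>l<n. \<bar>d l\<bar>) / 2"
    using density_diff_spectral[OF R S] by blast
  have Rc: "R \<in> carrier_mat n n" and Sc: "S \<in> carrier_mat n n"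
    using R S by (auto simp: density_def psd_def)
  define p where "p = model_out n Es Ms R"
  define q where "q = model_out n Es Ms S"
  define A where "A = {i. i < length Ms \<and> q i \<le> p i}"
  have A: "A \<subseteq> {..<length Ms}"
    by (auto simp: A_def)
  have "tv_dist (length Ms) p q = (\<Sum>i\<in>A. p i - q i)"
    using tv_dist_eq_sum_increase sum_model_out_diff[OF model R S] by (simp add: A_def p_def q_def)
  also have "\<dots> = (\<Sum>i\<in>A. Re (mtrace (effect n Es Ms i * (R - S))))"
  proof (rule sum.cong)
    fix i assume "i \<in> A"
    then have i: "i < length Ms"
      by (simp add: A_def)
    have F: "effect n Es Ms i \<in> carrier_mat n n"
      using hermitian_effect[OF model i] by (simp add: hermitian_def)
    show "p i - q i = Re (mtrace (effect n Es Ms i * (R - S)))"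
      using model_out_effect[OF model i Rc] model_out_effect[OF model i Sc]
        mult_minus_distrib_mat[OF F Rc Sc] mtrace_minus[of _ n] F Rc Sc
      by (simp add: p_def q_def)
  qed simp
  also have "\<dots> = Re (mtrace (M_set n Es Ms A * (R - S)))"
    using mtrace_M_set_mult[OF model A, of "R - S"] Sc by (simp add: Re_sum minus_carrier_mat)
  also have "\<dots> \<le> spread (M_set n Es Ms A) / 2 * (\<Sum>l<n. \<bar>d l\<bar>)"
    unfolding X using mtrace_mult_traceless_le[OF hermitian_M_set[OF model A] U d0] .
  also have "\<dots> = spread (M_set n Es Ms A) * trace_dist R S"
    by (simp add: td)
  finally show ?thesis
    using A by (auto simp: p_def q_def)
qed

lemma spread_le_tv_dist_extreme_eigenvectors:
  assumes model: "decision_model n Es Ms" and A: "A \<subseteq> {..<length Ms}"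
    and a: "a \<in> carrier_vec n" "a \<bullet>c a = 1"
    and b: "b \<in> carrier_vec n" "b \<bullet>c b = 1"
    and ea: "M_set n Es Ms A *\<^sub>v a = complex_of_real (lambda_max (M_set n Es Ms A)) \<cdot>\<^sub>v a"
    and eb: "M_set n Es Ms A *\<^sub>v b = complex_of_real (lambda_min (M_set n Es Ms A)) \<cdot>\<^sub>v b"
  shows "spread (M_set n Es Ms A) \<le> tv_dist (length Ms) (model_out n Es Ms (proj a)) (model_out n Es Ms (proj b))"
proof -
  define M where "M = M_set n Es Ms A"
  have M: "M \<in> carrier_mat n n"
    using hermitian_M_set[OF model A] by (simp add: M_def hermitian_def)
  have "(\<Sum>i\<in>A. model_out n Es Ms (proj a) i - model_out n Es Ms (proj b) i)
      = Re (mtrace (M * proj a)) - Re (mtrace (M * proj b))"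
    using model_out_effect[OF model] mtrace_M_set_mult[OF model A] A a(1) b(1)
    by (simp add: sum_subtractf Re_sum M_def subset_iff)
  also have "\<dots> = spread M"
    using mtrace_mult_proj[OF M a(1)] mtrace_mult_proj[OF M b(1)] ea eb a b
    by (simp add: M_def spread_def cscalar_prod_smult_left)
  finally show ?thesis
    using sum_le_tv_dist[OF sum_model_out_diff[OF model density_proj[OF a] density_proj[OF b]] A]
    by (simp add: M_def)
qed

lemma lipschitz_bounds_if_spread_le:
  assumes model: "decision_model n Es Ms" and K: "0 \<le> K"
    and spread: "\<And>A. A \<subseteq> {..<length Ms} \<Longrightarrow> spread (M_set n Es Ms A) \<le> K"
  shows "K \<in> lipschitz_bounds n Es Ms"
proof -
  have "tv_dist (length Ms) (model_out n Es Ms R) (model_out n Es Ms S) \<le> K * trace_dist R S"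
    if R: "density n R" and S: "density n S" for R S
  proof -
    obtain A where "A \<subseteq> {..<length Ms}"
      and "tv_dist (length Ms) (model_out n Es Ms R) (model_out n Es Ms S)
        \<le> spread (M_set n Es Ms A) * trace_dist R S"
      using tv_dist_le_spread[OF model R S] by blast
    then show ?thesis
      using spread mult_right_mono[OF _ trace_dist_density_nonneg[OF R S]] by (meson order_trans)
  qed
  then show ?thesis
    using K by (simp add: lipschitz_bounds_def)
qed

lemma spread_le_lipschitz_bound:
  assumes model: "decision_model n Es Ms" and n: "0 < n"
    and K: "K \<in> lipschitz_bounds n Es Ms" and A: "A \<subseteq> {..<length Ms}"
  shows "spread (M_set n Es Ms A) \<le> K"
proof (cases "lambda_min (M_set n Es Ms A) < lambda_max (M_set n Es Ms A)")
  case True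
  then obtain a b where a: "a \<in> carrier_vec n" "a \<bullet>c a = 1" and b: "b \<in> carrier_vec n" "b \<bullet>c b = 1"
    and ab: "a \<bullet>c b = 0"
    and "M_set n Es Ms A *\<^sub>v a = complex_of_real (lambda_max (M_set n Es Ms A)) \<cdot>\<^sub>v a"
      "M_set n Es Ms A *\<^sub>v b = complex_of_real (lambda_min (M_set n Es Ms A)) \<cdot>\<^sub>v b"
    using exists_orthonormal_extreme_eigenvectors[OF hermitian_M_set[OF model A] n] by blast
  then have "spread (M_set n Es Ms A) \<le> tv_dist (length Ms) (model_out n Es Ms (proj a)) (model_out n Es Ms (proj b))"
    using spread_le_tv_dist_extreme_eigenvectors[OF model A a b] by blast
  also have "\<dots> \<le> K * trace_dist (proj a) (proj b)"
    using K density_proj[OF a] density_proj[OF b] by (simp add: lipschitz_bounds_def)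
  finally show ?thesis
    using trace_dist_orthonormal_proj[OF a(1) b(1) a(2) b(2) ab] by simp
next
  case False
  then show ?thesis
    using K by (simp add: spread_def lipschitz_bounds_def)
qed

lemma lipschitz_bound_attained:
  assumes model: "decision_model n Es Ms" and K: "K \<in> lipschitz_bounds n Es Ms"
    and A: "A \<subseteq> {..<length Ms}" "spread (M_set n Es Ms A) = K"
    and \<psi>: "\<psi> \<in> carrier_vec n" "\<psi> \<bullet>c \<psi> = 1" and \<phi>: "\<phi> \<in> carrier_vec n" "\<phi> \<bullet>c \<phi> = 1"
    and \<psi>\<phi>: "\<psi> \<bullet>c \<phi> = 0"
    and e\<psi>: "eigenvector (M_set n Es Ms A) \<psi> (complex_of_real (lambda_max (M_set n Es Ms A)))"
    and e\<phi>: "eigenvector (M_set n Es Ms A) \<phi> (complex_of_real (lambda_min (M_set n Es Ms A)))"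
  shows "tv_dist (length Ms) (model_out n Es Ms (proj \<psi>)) (model_out n Es Ms (proj \<phi>)) = K"
    and "trace_dist (proj \<psi>) (proj \<phi>) = 1"
proof -
  show td: "trace_dist (proj \<psi>) (proj \<phi>) = 1"
    using trace_dist_orthonormal_proj[OF \<psi>(1) \<phi>(1) \<psi>(2) \<phi>(2) \<psi>\<phi>] .
  have "K \<le> tv_dist (length Ms) (model_out n Es Ms (proj \<psi>)) (model_out n Es Ms (proj \<phi>))"
    using spread_le_tv_dist_extreme_eigenvectors[OF model A(1) \<psi> \<phi>] e\<psi> e\<phi> A(2)
    unfolding eigenvector_def by blast
  moreover have "tv_dist (length Ms) (model_out n Es Ms (proj \<psi>)) (model_out n Es Ms (proj \<phi>))
      \<le> K * trace_dist (proj \<psi>) (proj \<phi>)"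
    using K density_proj[OF \<psi>] density_proj[OF \<phi>] unfolding lipschitz_bounds_def by blast
  ultimately show "tv_dist (length Ms) (model_out n Es Ms (proj \<psi>)) (model_out n Es Ms (proj \<phi>)) = K"
    using td by simp
qed

theorem theorem3:
  fixes n :: nat and Es Ms :: "complex mat list"
  defines "Kstar \<equiv> Max ((\<lambda>A. lambda_max (M_set n Es Ms A) - lambda_min (M_set n Es Ms A))
                          ` Pow {..<length Ms})"
  assumes n: "0 < n"
    and model: "decision_model n Es Ms"
  shows "Kstar \<in> lipschitz_bounds n Es Ms \<and> (\<forall>K \<in> lipschitz_bounds n Es Ms. Kstar \<le> K) \<and>
    (\<forall>Astar \<psi> \<phi>.
       Astar \<subseteq> {..<length Ms} \<longrightarrow>
       lambda_max (M_set n Es Ms Astar) - lambda_min (M_set n Es Ms Astar) = Kstar \<longrightarrow>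
       \<psi> \<in> carrier_vec n \<longrightarrow> \<phi> \<in> carrier_vec n \<longrightarrow>
       \<psi> \<bullet>c \<psi> = 1 \<longrightarrow> \<phi> \<bullet>c \<phi> = 1 \<longrightarrow>
       eigenvector (M_set n Es Ms Astar) \<psi> (complex_of_real (lambda_max (M_set n Es Ms Astar))) \<longrightarrow>
       eigenvector (M_set n Es Ms Astar) \<phi> (complex_of_real (lambda_min (M_set n Es Ms Astar))) \<longrightarrow>
       \<psi> \<bullet>c \<phi> = 0 \<longrightarrow>
       tv_dist (length Ms) (model_out n Es Ms (proj \<psi>)) (model_out n Es Ms (proj \<phi>))
         = Kstar * trace_dist (proj \<psi>) (proj \<phi>) \<and>
       Kstar * trace_dist (proj \<psi>) (proj \<phi>) = Kstar)"
proof -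
  have K: "Kstar = Max ((\<lambda>A. spread (M_set n Es Ms A)) ` Pow {..<length Ms})"
    by (simp add: Kstar_def spread_def)
  have spread_le: "spread (M_set n Es Ms A) \<le> Kstar" if "A \<subseteq> {..<length Ms}" for A
    unfolding K using that by (intro Max_ge) auto
  have "Kstar \<in> (\<lambda>A. spread (M_set n Es Ms A)) ` Pow {..<length Ms}"
    unfolding K by (intro Max_in) auto
  then obtain A0 where A0: "A0 \<subseteq> {..<length Ms}" "spread (M_set n Es Ms A0) = Kstar"
    by auto
  have "0 \<le> Kstar"
    using spread_le[of "{}"] hermitian_lambda_min_le_max[OF hermitian_M_set[OF model, of "{}"] n]
    by (simp add: spread_def)
  then have upper: "Kstar \<in> lipschitz_bounds n Es Ms"
    using lipschitz_bounds_if_spread_le[OF model _ spread_le] by blast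
  have least: "\<forall>K \<in> lipschitz_bounds n Es Ms. Kstar \<le> K"
    using spread_le_lipschitz_bound[OF model n _ A0(1)] A0(2) by auto
  have "tv_dist (length Ms) (model_out n Es Ms (proj \<psi>)) (model_out n Es Ms (proj \<phi>))
      = Kstar * trace_dist (proj \<psi>) (proj \<phi>) \<and> Kstar * trace_dist (proj \<psi>) (proj \<phi>) = Kstar"
    if "Astar \<subseteq> {..<length Ms}" "lambda_max (M_set n Es Ms Astar) - lambda_min (M_set n Es Ms Astar) = Kstar"
      "\<psi> \<in> carrier_vec n" "\<phi> \<in> carrier_vec n" "\<psi> \<bullet>c \<psi> = 1" "\<phi> \<bullet>c \<phi> = 1"
      "eigenvector (M_set n Es Ms Astar) \<psi> (complex_of_real (lambda_max (M_set n Es Ms Astar)))"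
      "eigenvector (M_set n Es Ms Astar) \<phi> (complex_of_real (lambda_min (M_set n Es Ms Astar)))"
      "\<psi> \<bullet>c \<phi> = 0"
    for Astar \<psi> \<phi>
    using lipschitz_bound_attained[OF model upper that(1) that(2)[folded spread_def] that(3,5,4,6,9,7,8)]
    by simp
  then show ?thesis
    using upper least by blast
qed

end
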